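(* Setting as in the context. If $M$ and $N$ are $(A,B)$-adjacent, then there is no violation of $(M,N)$.
   Context: Let $K$ be a field and $\mathcal{Q}$ a bipartite quiver (every arrow goes from a source vertex to a sink vertex) with arrows $h_1,\dots,h_r$ and a nonnegative integer $m_\gamma$ attached to each vertex $\gamma$. For each $k$ let $X^{(k)}=[x^{(k)}_{ij}]$ be an $m_{{\rm t}(h_k)}\times m_{{\rm s}(h_k)}$ matrix of distinct independent variables (all variables distinct), in $K[X]$. For a sink $\alpha$, $A_\alpha$ is the horizontal concatenation $[X^{(r_1)}|\cdots|X^{(r_s)}]$ over the arrows $h_{r_1},\dots,h_{r_s}$ ($r_1<\dots<r_s$) with target $\alpha$; for a source $\beta$, $A_\beta$ is the vertical stacking of $X^{(r'_1)},\dots,X^{(r'_t)}$ over the arrows with source $\beta$ ($r'_1<\dots<r'_t$). Fix a lexicographic monomial order $>$ consistent with every $A_\gamma$ (in each $A_\gamma$ the variables strictly decrease from left to right along rows and from top to bottom along columns). Fix an arrow from a source $\gamma_2$ to a sink $\gamma_1$, let $A=A_{\gamma_1}$, $B=A_{\gamma_2}$, let $u,v$ be positive integers, and let $D_u(A)$, $D_v(B)$ be the sets of $u\times u$ minors of $A$ and $v\times v$ minors of $B$. Let $M\in D_u(A)$, $N\in D_v(B)$, $L=\mathrm{lcm}(\mathrm{LM}(M),\mathrm{LM}(N))=x_{p_1}\cdots x_{p_l}$ with $x_{p_1}>\dots>x_{p_l}$, where $p_i=(\alpha_i,\beta_i,r_i)$ means $x_{p_i}=x^{(r_i)}_{\alpha_i\beta_i}$;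 let $S_M=\{i:x_{p_i}\mid\mathrm{LM}(M)\}$, $S_N=\{i:x_{p_i}\mid\mathrm{LM}(N)\}$. A violation of $(M,N)$ is a triple $(p_i,p_j,p_k)$ of distinct indices $i\in S_M$, $j\in S_N$, $k\in S_M\cap S_N$ with $r_i=r_j=r_k$, $\alpha_i\le\alpha_j<\alpha_k$, $\beta_j\le\beta_i<\beta_k$ and $(\alpha_i,\beta_i)\ne(\alpha_j,\beta_j)$. For a minor $P$ let $V_P$ be the set of variables dividing $\mathrm{LM}(P)$ and $d(P,Q)=|(V_P\setminus V_Q)\cup(V_Q\setminus V_P)|$. Let $D^L_u(A)=\{P\in D_u(A):\mathrm{LM}(P)\mid L\}$ and $D^L_v(B)=\{Q\in D_v(B):\mathrm{LM}(Q)\mid L\}$. $M$ and $N$ are $(A,B)$-adjacent if $M\ne N$, there is no $P\in D^L_u(A)$ with $d(P,N)<d(M,N)$, and there is no $Q\in D^L_v(B)$ with $d(M,Q)<d(M,N)$. *)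

theory Defs
  imports "Jordan_Normal_Form.Determinant" "Jordan_Normal_Form.DL_Submatrix"
    "HOL-Library.Poly_Mapping"
begin

(* A variable x^{(r)}_{alpha beta} is encoded by the triple (alpha, beta, r)
   (all indices 0-based). *)
type_synonym var = "nat \<times> nat \<times> nat"
type_synonym mon = "var \<Rightarrow>\<^sub>0 nat"
type_synonym 'a mpoly = "mon \<Rightarrow>\<^sub>0 'a"

definition Var :: "var \<Rightarrow> 'a::comm_ring_1 mpoly" where
  "Var x = Poly_Mapping.single (Poly_Mapping.single x 1) 1"

(* Quiver: arrows 0..<nr, source s k, target t k; dimension vector m. *)
definition bipartite_quiver :: "nat \<Rightarrow> (nat \<Rightarrow> 'v) \<Rightarrow> (nat \<Rightarrow> 'v) \<Rightarrow> bool" where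
  "bipartite_quiver nr s t \<longleftrightarrow> (\<forall>k<nr. \<forall>k'<nr. s k \<noteq> t k')"

definition qvars :: "nat \<Rightarrow> (nat \<Rightarrow> 'v) \<Rightarrow> (nat \<Rightarrow> 'v) \<Rightarrow> ('v \<Rightarrow> nat) \<Rightarrow> var set" where
  "qvars nr s t m = {(i, j, k). k < nr \<and> i < m (t k) \<and> j < m (s k)}"

(* A_gamma for a sink gamma: horizontal concatenation of the X^{(k)} with t k = gamma,
   in increasing order of k *)
definition sink_mat :: "nat \<Rightarrow> (nat \<Rightarrow> 'v) \<Rightarrow> (nat \<Rightarrow> 'v) \<Rightarrow> ('v \<Rightarrow> nat) \<Rightarrow> 'v \<Rightarrow> var mat" where
  "sink_mat nr s t m \<gamma> =
    (let cols = concat (map (\<lambda>k. map (\<lambda>j. (j, k)) [0..<m (s k)]) (filter (\<lambda>k. t k = \<gamma>) [0..<nr]))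
     in mat (m \<gamma>) (length cols) (\<lambda>(i, c). (i, fst (cols ! c), snd (cols ! c))))"

(* A_gamma for a source gamma: vertical stacking of the X^{(k)} with s k = gamma,
   in increasing order of k *)
definition source_mat :: "nat \<Rightarrow> (nat \<Rightarrow> 'v) \<Rightarrow> (nat \<Rightarrow> 'v) \<Rightarrow> ('v \<Rightarrow> nat) \<Rightarrow> 'v \<Rightarrow> var mat" where
  "source_mat nr s t m \<gamma> =
    (let rows = concat (map (\<lambda>k. map (\<lambda>i. (i, k)) [0..<m (t k)]) (filter (\<lambda>k. s k = \<gamma>) [0..<nr]))
     in mat (length rows) (m \<gamma>) (\<lambda>(r, j). (fst (rows ! r), j, snd (rows ! r))))"

(* (x, y) \<in> ord  means  x > y.  The order is consistent with a matrix of variables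
   if variables strictly decrease left-to-right in rows and top-to-bottom in columns *)
definition consistent :: "(var \<times> var) set \<Rightarrow> var mat \<Rightarrow> bool" where
  "consistent ord A \<longleftrightarrow>
     (\<forall>i<dim_row A. \<forall>j<dim_col A. \<forall>j'<dim_col A. j < j' \<longrightarrow> (A $$ (i, j), A $$ (i, j')) \<in> ord) \<and>
     (\<forall>i<dim_row A. \<forall>i'<dim_row A. \<forall>j<dim_col A. i < i' \<longrightarrow> (A $$ (i, j), A $$ (i', j)) \<in> ord)"

definition lex_gt :: "(var \<times> var) set \<Rightarrow> mon \<Rightarrow> mon \<Rightarrow> bool" where
  "lex_gt ord a b \<longleftrightarrow>
     (\<exists>x. Poly_Mapping.lookup b x < Poly_Mapping.lookup a x \<and> (\<forall>y. (y, x) \<in> ord \<longrightarrow> Poly_Mapping.lookup a y = Poly_Mapping.lookup b y))"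

definition LM :: "(var \<times> var) set \<Rightarrow> 'a::zero mpoly \<Rightarrow> mon" where
  "LM ord p = (THE a. a \<in> Poly_Mapping.keys p \<and> (\<forall>b\<in>Poly_Mapping.keys p. b \<noteq> a \<longrightarrow> lex_gt ord a b))"

definition mon_dvd :: "mon \<Rightarrow> mon \<Rightarrow> bool" where
  "mon_dvd a b \<longleftrightarrow> (\<forall>x. Poly_Mapping.lookup a x \<le> Poly_Mapping.lookup b x)"

definition mon_lcm :: "mon \<Rightarrow> mon \<Rightarrow> mon" where
  "mon_lcm a b = Abs_poly_mapping (\<lambda>x. max (Poly_Mapping.lookup a x) (Poly_Mapping.lookup b x))"

definition minors :: "nat \<Rightarrow> var mat \<Rightarrow> 'a::comm_ring_1 mpoly set" where
  "minors u A = {det (submatrix (map_mat Var A) R C) | R C.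
      R \<subseteq> {..<dim_row A} \<and> C \<subseteq> {..<dim_col A} \<and> card R = u \<and> card C = u}"

definition Vset :: "(var \<times> var) set \<Rightarrow> 'a::zero mpoly \<Rightarrow> var set" where
  "Vset ord P = Poly_Mapping.keys (LM ord P)"

definition dist_LM :: "(var \<times> var) set \<Rightarrow> 'a::zero mpoly \<Rightarrow> 'a mpoly \<Rightarrow> nat" where
  "dist_LM ord P Q = card ((Vset ord P - Vset ord Q) \<union> (Vset ord Q - Vset ord P))"

definition minors_L :: "(var \<times> var) set \<Rightarrow> mon \<Rightarrow> nat \<Rightarrow> var mat \<Rightarrow> 'a::comm_ring_1 mpoly set" where
  "minors_L ord L u A = {P \<in> minors u A. mon_dvd (LM ord P) L}"

definition adjacent :: "(var \<times> var) set \<Rightarrow> nat \<Rightarrow> var mat \<Rightarrow> nat \<Rightarrow> var mat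
    \<Rightarrow> 'a::comm_ring_1 mpoly \<Rightarrow> 'a mpoly \<Rightarrow> bool" where
  "adjacent ord u A v B M N \<longleftrightarrow>
     (let L = mon_lcm (LM ord M) (LM ord N) in
       M \<noteq> N \<and>
       \<not> (\<exists>P \<in> minors_L ord L u A. dist_LM ord P N < dist_LM ord M N) \<and>
       \<not> (\<exists>Q \<in> minors_L ord L v B. dist_LM ord M Q < dist_LM ord M N))"

(* violation: variables p_i, p_j, p_k (distinct indices of L = distinct variables of L)
   with p_i | LM(M), p_j | LM(N), p_k | LM(M) and LM(N) *)
definition violation :: "(var \<times> var) set \<Rightarrow> 'a::zero mpoly \<Rightarrow> 'a mpoly \<Rightarrow> var \<Rightarrow> var \<Rightarrow> var \<Rightarrow> bool" where
  "violation ord M N p1 p2 p3 \<longleftrightarrow>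
     (case (p1, p2, p3) of ((ai, bi, ri), (aj, bj, rj), (ak, bk, rk)) \<Rightarrow>
       p1 \<in> Vset ord M \<and> p2 \<in> Vset ord N \<and> p3 \<in> Vset ord M \<inter> Vset ord N \<and>
       p1 \<noteq> p2 \<and> p1 \<noteq> p3 \<and> p2 \<noteq> p3 \<and>
       ri = rj \<and> rj = rk \<and> ai \<le> aj \<and> aj < ak \<and> bj \<le> bi \<and> bi < bk \<and> (ai, bi) \<noteq> (aj, bj))"

end

(*
  The leading monomial of a minor of a matrix of distinct variables, under an order that
  decreases along rows and columns, is the product of its main diagonal.  Hence the leading
  monomials of the u-minors of A are exactly the products of u-element chains of entries in
  the order "below and to the right", and likewise for B.  A violation (x, y, w) of (M, N)
  lies in one block X^(r).  For a minimal violation, the segment of the chain of M from x up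
  to the next variable z common to both chains, and the segment of the chain of N from y up
  to z, are disjoint from the other chain and lie in that block, where the two chain orders
  agree.  Exchanging the shorter segment for an equally large part of the other one keeps a
  chain of the same size.  It yields a minor of A (or of B) whose leading monomial divides L
  and which shares more variables with N (or with M), contradicting adjacency.
*)

theory Submission
  imports Defs
begin

section \<open>Square-free monomials and the lexicographic order\<close>

definition mon_of_set :: "var set \<Rightarrow> mon" where
  "mon_of_set V = (\<Sum>x\<in>V. Poly_Mapping.single x 1)"

lemma lookup_mon_of_set:
  "finite V \<Longrightarrow> Poly_Mapping.lookup (mon_of_set V) x = (if x \<in> V then 1 else 0)"
  by (simp add: mon_of_set_def lookup_sum lookup_single when_def)

lemma keys_mon_of_set: "finite V \<Longrightarrow> Poly_Mapping.keys (mon_of_set V) = V"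
  by (simp add: set_eq_iff in_keys_iff lookup_mon_of_set)

lemma mon_of_set_inject:
  "finite V \<Longrightarrow> finite W \<Longrightarrow> mon_of_set V = mon_of_set W \<longleftrightarrow> V = W"
  by (metis keys_mon_of_set)

lemma prod_Var:
  "finite V \<Longrightarrow> (\<Prod>x\<in>V. Var x :: 'a::comm_ring_1 mpoly) = Poly_Mapping.single (mon_of_set V) 1"
  by (induction V rule: finite_induct) (simp_all add: mon_of_set_def Var_def mult_single)

lemma mon_dvd_lcm_mon_of_set:
  assumes "finite W1" "finite W2" "V \<subseteq> W1 \<union> W2"
  shows "mon_dvd (mon_of_set V) (mon_lcm (mon_of_set W1) (mon_of_set W2))"
proof -
  let ?max = "\<lambda>x. max (Poly_Mapping.lookup (mon_of_set W1) x) (Poly_Mapping.lookup (mon_of_set W2) x)"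
  have "finite {x. ?max x \<noteq> 0}"
    by (rule finite_subset[of _ "W1 \<union> W2"]) (use assms in \<open>auto simp: lookup_mon_of_set\<close>)
  then have "Poly_Mapping.lookup (mon_lcm (mon_of_set W1) (mon_of_set W2)) = ?max"
    unfolding mon_lcm_def by (rule lookup_Abs_poly_mapping)
  moreover have "finite V"
    using assms finite_subset by blast
  ultimately show ?thesis
    using assms unfolding mon_dvd_def by (auto simp: lookup_mon_of_set)
qed

lemma strict_linear_order_on_transD:
  "strict_linear_order_on Q ord \<Longrightarrow> (x, y) \<in> ord \<Longrightarrow> (y, z) \<in> ord \<Longrightarrow> (x, z) \<in> ord"
  unfolding strict_linear_order_on_def by (meson transD)

lemma strict_linear_order_on_asymD:
  "strict_linear_order_on Q ord \<Longrightarrow> (x, y) \<in> ord \<Longrightarrow> (y, x) \<notin> ord"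
  unfolding strict_linear_order_on_def irrefl_def by (meson transD)

lemma lex_gt_asym:
  assumes order: "strict_linear_order_on Q ord"
    and "Poly_Mapping.keys a \<subseteq> Q" "Poly_Mapping.keys b \<subseteq> Q" "lex_gt ord a b"
  shows "\<not> lex_gt ord b a"
proof
  assume "lex_gt ord b a"
  then obtain x' where x': "Poly_Mapping.lookup a x' < Poly_Mapping.lookup b x'"
    "\<And>y. (y, x') \<in> ord \<Longrightarrow> Poly_Mapping.lookup b y = Poly_Mapping.lookup a y"
    unfolding lex_gt_def by blast
  obtain x where x: "Poly_Mapping.lookup b x < Poly_Mapping.lookup a x"
    "\<And>y. (y, x) \<in> ord \<Longrightarrow> Poly_Mapping.lookup a y = Poly_Mapping.lookup b y"
    using \<open>lex_gt ord a b\<close> unfolding lex_gt_def by blast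
  have "x \<in> Q" "x' \<in> Q" "x \<noteq> x'"
    using x(1) x'(1) assms(2,3) by (auto simp: in_keys_iff)
  then have "(x, x') \<in> ord \<or> (x', x) \<in> ord"
    using order unfolding strict_linear_order_on_def total_on_def by blast
  then show False
    using x(1) x'(1) x(2)[of x'] x'(2)[of x] by auto
qed

lemma LM_eqI:
  assumes order: "strict_linear_order_on Q ord"
    and keys_in: "\<And>b. b \<in> Poly_Mapping.keys p \<Longrightarrow> Poly_Mapping.keys b \<subseteq> Q"
    and a: "a \<in> Poly_Mapping.keys p"
    and greatest: "\<And>b. b \<in> Poly_Mapping.keys p \<Longrightarrow> b \<noteq> a \<Longrightarrow> lex_gt ord a b"
  shows "LM ord p = a"
  unfolding LM_def
proof (rule the_equality)
  fix a' assume a': "a' \<in> Poly_Mapping.keys p \<and> (\<forall>b\<in>Poly_Mapping.keys p. b \<noteq> a' \<longrightarrow> lex_gt ord a' b)"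
  show "a' = a"
  proof (rule ccontr)
    assume "a' \<noteq> a"
    then have "lex_gt ord a' a" "lex_gt ord a a'"
      using a a' greatest by auto
    then show False
      using lex_gt_asym[OF order keys_in keys_in] a a' by blast
  qed
qed (use a greatest in blast)

section \<open>The leading monomial of a generic determinant\<close>

lemma permutes_less:
  fixes p :: "nat \<Rightarrow> nat"
  shows "p permutes {0..<n} \<Longrightarrow> i < n \<Longrightarrow> p i < n"
  using permutes_in_image[of p "{0..<n}" i] by simp

lemma permutes_least_moved:
  fixes p :: "nat \<Rightarrow> nat"
  assumes p: "p permutes {0..<n}" and "p \<noteq> id"
  obtains i0 where "i0 < n" "p i0 \<noteq> i0" "\<And>j. j < i0 \<Longrightarrow> p j = j"
proof -
  have "\<exists>i. p i \<noteq> i"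
    using \<open>p \<noteq> id\<close> by auto
  then obtain i0 where "p i0 \<noteq> i0" "\<And>j. j < i0 \<Longrightarrow> p j = j"
    using exists_least_iff[of "\<lambda>i. p i \<noteq> i"] by auto
  moreover have "i0 < n"
    using \<open>p i0 \<noteq> i0\<close> p unfolding permutes_def by force
  ultimately show ?thesis
    using that by blast
qed

lemma permutes_moved_ge:
  fixes p :: "nat \<Rightarrow> nat"
  assumes p: "p permutes S" and fixed: "\<And>j. j < i0 \<Longrightarrow> p j = j" and "p j \<noteq> j"
  shows "i0 \<le> j" "i0 \<le> p j"
proof -
  show "i0 \<le> j"
    using fixed \<open>p j \<noteq> j\<close> not_le by blast
  show "i0 \<le> p j"
  proof (rule ccontr)
    assume "\<not> i0 \<le> p j"
    then have "p (p j) = p j"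
      using fixed by simp
    then show False
      using \<open>p j \<noteq> j\<close> permutes_inj[OF p] by (meson injD)
  qed
qed

locale decreasing_square =
  fixes Q :: "var set" and ord :: "(var \<times> var) set" and n :: nat and e :: "nat \<Rightarrow> nat \<Rightarrow> var"
  assumes order: "strict_linear_order_on Q ord"
    and entry_in: "i < n \<Longrightarrow> j < n \<Longrightarrow> e i j \<in> Q"
    and entry_inj: "\<lbrakk>i < n; j < n; i' < n; j' < n; e i j = e i' j'\<rbrakk> \<Longrightarrow> i = i' \<and> j = j'"
    and row_decreasing: "\<lbrakk>i < n; j < j'; j' < n\<rbrakk> \<Longrightarrow> (e i j, e i j') \<in> ord"
    and col_decreasing: "\<lbrakk>i < i'; i' < n; j < n\<rbrakk> \<Longrightarrow> (e i j, e i' j) \<in> ord"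
begin

definition perm_vars :: "(nat \<Rightarrow> nat) \<Rightarrow> var set" where
  "perm_vars p = (\<lambda>i. e i (p i)) ` {..<n}"

lemma finite_perm_vars [simp]: "finite (perm_vars p)"
  by (simp add: perm_vars_def)

lemma det_expansion:
  "(det (mat n n (\<lambda>(i, j). Var (e i j))) :: 'a::comm_ring_1 mpoly) =
    (\<Sum>p | p permutes {0..<n}. Poly_Mapping.single (mon_of_set (perm_vars p)) (of_int (sign p)))"
proof -
  let ?X = "mat n n (\<lambda>(i, j). Var (e i j)) :: 'a mpoly mat"
  have perm_term: "of_int (sign p) * (\<Prod>i = 0..<n. ?X $$ (i, p i)) =
      Poly_Mapping.single (mon_of_set (perm_vars p)) (of_int (sign p))"
    if p: "p permutes {0..<n}" for p
  proof -
    have "inj_on (\<lambda>i. e i (p i)) {..<n}"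
      by (rule inj_onI) (use entry_inj permutes_less[OF p] in blast)
    have "(\<Prod>i = 0..<n. ?X $$ (i, p i)) = (\<Prod>i<n. Var (e i (p i)))"
      unfolding atLeast0LessThan by (rule prod.cong) (simp_all add: permutes_less[OF p])
    also have "\<dots> = (\<Prod>x\<in>perm_vars p. Var x)"
      unfolding perm_vars_def by (simp add: prod.reindex[OF \<open>inj_on _ _\<close>])
    finally show ?thesis
      by (subst single_of_int[symmetric]) (simp del: single_of_int add: prod_Var mult_single)
  qed
  have "det ?X = (\<Sum>p | p permutes {0..<n}. of_int (sign p) * (\<Prod>i = 0..<n. ?X $$ (i, p i)))"
    by (rule det_def') simp
  also have "\<dots> = (\<Sum>p | p permutes {0..<n}. Poly_Mapping.single (mon_of_set (perm_vars p)) (of_int (sign p)))"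
    by (rule sum.cong[OF refl], rule perm_term) simp
  finally show ?thesis .
qed

lemma perm_vars_id: "perm_vars id = (\<lambda>i. e i i) ` {..<n}"
  by (simp add: perm_vars_def)

lemma perm_vars_subset: "p permutes {0..<n} \<Longrightarrow> perm_vars p \<subseteq> Q"
  by (auto simp: perm_vars_def permutes_less entry_in)

lemma perm_vars_eq_id_imp:
  assumes p: "p permutes {0..<n}" and eq: "perm_vars p = perm_vars id"
  shows "p = id"
proof
  fix i
  show "p i = id i"
  proof (cases "i < n")
    case True
    then have "e i i \<in> perm_vars p"
      using eq by (simp add: perm_vars_def)
    then obtain j where "j < n" "e i i = e j (p j)"
      by (auto simp: perm_vars_def)
    then show ?thesis
      using entry_inj[of i i j "p j"] True permutes_less[OF p] by auto
  next
    case False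
    then show ?thesis
      using p unfolding permutes_def by simp
  qed
qed

lemma diagonal_dominates:
  assumes "i0 \<le> i" "i0 \<le> j" "i < n" "j < n" "(i, j) \<noteq> (i0, i0)"
  shows "(e i0 i0, e i j) \<in> ord"
proof (cases "i = i0")
  case True
  then show ?thesis
    using assms row_decreasing by auto
next
  case False
  then have below: "(e i0 i0, e i i0) \<in> ord"
    using assms col_decreasing by simp
  show ?thesis
  proof (cases "j = i0")
    case False
    then have "(e i i0, e i j) \<in> ord"
      using assms row_decreasing by simp
    then show ?thesis
      using below strict_linear_order_on_transD[OF order] by blast
  qed (use below in simp)
qed

lemma sym_diff_perm_vars_moved:
  assumes "y \<in> perm_vars id \<union> perm_vars p" "y \<notin> perm_vars id \<inter> perm_vars p"
  shows "\<exists>j<n. p j \<noteq> j \<and> (y = e j j \<or> y = e j (p j))"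
proof (cases "y \<in> perm_vars id")
  case True
  then obtain j where j: "j < n" "y = e j j"
    by (auto simp: perm_vars_def)
  have "p j \<noteq> j"
  proof
    assume "p j = j"
    then have "y \<in> perm_vars p"
      using j by (auto simp: perm_vars_def intro!: image_eqI[of _ _ j])
    then show False
      using True assms(2) by blast
  qed
  then show ?thesis
    using j by blast
next
  case False
  then have "y \<in> perm_vars p"
    using assms(1) by blast
  then obtain j where j: "j < n" "y = e j (p j)"
    by (auto simp: perm_vars_def)
  have "p j \<noteq> j"
  proof
    assume "p j = j"
    then have "y \<in> perm_vars id"
      using j by (auto simp: perm_vars_def intro!: image_eqI[of _ _ j])
    then show False
      using False by blast
  qed
  then show ?thesis
    using j by blast
qed

text \<open>If \<open>i0\<close> is the least index moved by \<open>p\<close>, the diagonal variable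
  \<open>e i0 i0\<close> is missing from the term of \<open>p\<close> and dominates every variable in which the
  terms of \<open>p\<close> and \<open>id\<close> differ; so the diagonal term is lexicographically larger.\<close>

lemma diagonal_dominates_sym_diff:
  assumes p: "p permutes {0..<n}" and fixed: "\<And>j. j < i0 \<Longrightarrow> p j = j"
    and y: "y \<in> perm_vars id \<union> perm_vars p" "y \<notin> perm_vars id \<inter> perm_vars p"
  shows "y = e i0 i0 \<or> (e i0 i0, y) \<in> ord"
proof -
  obtain j where j: "j < n" "p j \<noteq> j" "y = e j j \<or> y = e j (p j)"
    using sym_diff_perm_vars_moved[OF y] by blast
  note ge = permutes_moved_ge[OF p fixed j(2)]
  have "(e i0 i0, e j (p j)) \<in> ord"
    using diagonal_dominates[of i0 j "p j"] ge j(1,2) permutes_less[OF p] by auto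
  moreover have "e j j = e i0 i0 \<or> (e i0 i0, e j j) \<in> ord"
    using diagonal_dominates[of i0 j j] ge j(1) by fastforce
  ultimately show ?thesis
    using j(3) by auto
qed

lemma lex_gt_diagonal:
  assumes p: "p permutes {0..<n}" and "p \<noteq> id"
  shows "lex_gt ord (mon_of_set (perm_vars id)) (mon_of_set (perm_vars p))"
proof -
  obtain i0 where "i0 < n" and moved: "p i0 \<noteq> i0" and fixed: "\<And>j. j < i0 \<Longrightarrow> p j = j"
    using permutes_least_moved[OF assms] by blast
  have x_id: "e i0 i0 \<in> perm_vars id"
    using \<open>i0 < n\<close> by (simp add: perm_vars_def)
  have x_p: "e i0 i0 \<notin> perm_vars p"
  proof
    assume "e i0 i0 \<in> perm_vars p"
    then obtain j where "j < n" "e i0 i0 = e j (p j)"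
      by (auto simp: perm_vars_def)
    then show False
      using entry_inj[of i0 i0 j "p j"] \<open>i0 < n\<close> permutes_less[OF p] moved by auto
  qed
  show ?thesis
    unfolding lex_gt_def
  proof (intro exI conjI allI impI)
    show "Poly_Mapping.lookup (mon_of_set (perm_vars p)) (e i0 i0) <
        Poly_Mapping.lookup (mon_of_set (perm_vars id)) (e i0 i0)"
      using x_id x_p by (simp add: lookup_mon_of_set)
    fix y assume below: "(y, e i0 i0) \<in> ord"
    have "y \<in> perm_vars id \<longleftrightarrow> y \<in> perm_vars p"
    proof (rule ccontr)
      assume "\<not> (y \<in> perm_vars id \<longleftrightarrow> y \<in> perm_vars p)"
      then have "y = e i0 i0 \<or> (e i0 i0, y) \<in> ord"
        by (intro diagonal_dominates_sym_diff[OF p fixed]) auto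
      then show False
        using below strict_linear_order_on_asymD[OF order below] by auto
    qed
    then show "Poly_Mapping.lookup (mon_of_set (perm_vars id)) y = Poly_Mapping.lookup (mon_of_set (perm_vars p)) y"
      by (simp add: lookup_mon_of_set)
  qed
qed

theorem LM_det:
  "LM ord (det (mat n n (\<lambda>(i, j). Var (e i j))) :: 'a::comm_ring_1 mpoly) =
    mon_of_set ((\<lambda>i. e i i) ` {..<n})"
proof -
  let ?d = "det (mat n n (\<lambda>(i, j). Var (e i j))) :: 'a mpoly"
  let ?P = "{p. p permutes {0..<n}}"
  have keys_d: "Poly_Mapping.keys ?d \<subseteq> (\<lambda>p. mon_of_set (perm_vars p)) ` ?P"
    unfolding det_expansion by (rule order_trans[OF keys_sum]) auto
  have "Poly_Mapping.lookup ?d (mon_of_set (perm_vars id)) = (\<Sum>p\<in>?P. if p = id then of_int (sign p) else 0)"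
    unfolding det_expansion lookup_sum
    by (rule sum.cong) (auto simp: lookup_single when_def mon_of_set_inject dest: perm_vars_eq_id_imp)
  also have "\<dots> = 1"
    using permutes_id[of "{0..<n}"] by (simp add: finite_permutations sign_id)
  finally have diag_key: "mon_of_set (perm_vars id) \<in> Poly_Mapping.keys ?d"
    by (simp add: in_keys_iff)
  show ?thesis
    unfolding perm_vars_id[symmetric]
  proof (rule LM_eqI[OF order _ diag_key])
    fix b assume "b \<in> Poly_Mapping.keys ?d"
    then obtain p where p: "p permutes {0..<n}" "b = mon_of_set (perm_vars p)"
      using keys_d by blast
    then show "Poly_Mapping.keys b \<subseteq> Q"
      by (simp add: keys_mon_of_set perm_vars_subset)
    assume "b \<noteq> mon_of_set (perm_vars id)"
    then show "lex_gt ord (mon_of_set (perm_vars id)) b"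
      using p lex_gt_diagonal by blast
  qed
qed

end

section \<open>Leading monomials of minors and chains of positions\<close>

definition positions :: "'b mat \<Rightarrow> (nat \<times> nat) set" where
  "positions A = {..<dim_row A} \<times> {..<dim_col A}"

lemma elements_mat_eq_image: "elements_mat A = (\<lambda>p. A $$ p) ` positions A"
  by (auto simp: positions_def elements_mat_def)

definition pos_less :: "nat \<times> nat \<Rightarrow> nat \<times> nat \<Rightarrow> bool" where
  "pos_less p q \<longleftrightarrow> fst p < fst q \<and> snd p < snd q"

definition strict_chain :: "('b \<Rightarrow> 'b \<Rightarrow> bool) \<Rightarrow> 'b set \<Rightarrow> bool" where
  "strict_chain lt V \<longleftrightarrow> (\<forall>x\<in>V. \<forall>y\<in>V. x \<noteq> y \<longrightarrow> lt x y \<or> lt y x)"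

lemma strict_chainD: "strict_chain lt V \<Longrightarrow> x \<in> V \<Longrightarrow> y \<in> V \<Longrightarrow> x \<noteq> y \<Longrightarrow> lt x y \<or> lt y x"
  unfolding strict_chain_def by blast

lemma strict_chain_image_iff:
  assumes inj: "inj_on f S" and iso: "\<And>p q. p \<in> S \<Longrightarrow> q \<in> S \<Longrightarrow> R p q \<longleftrightarrow> lt (f p) (f q)"
  shows "strict_chain lt (f ` S) \<longleftrightarrow> strict_chain R S"
proof
  assume chain: "strict_chain lt (f ` S)"
  show "strict_chain R S"
    unfolding strict_chain_def
  proof (intro ballI impI)
    fix p q assume pq: "p \<in> S" "q \<in> S" "p \<noteq> q"
    then have "f p \<noteq> f q"
      using inj by (meson inj_onD)
    then have "lt (f p) (f q) \<or> lt (f q) (f p)"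
      by (intro strict_chainD[OF chain] imageI pq)
    then show "R p q \<or> R q p"
      using iso[OF pq(1,2)] iso[OF pq(2,1)] by simp
  qed
next
  assume chain: "strict_chain R S"
  show "strict_chain lt (f ` S)"
    unfolding strict_chain_def
  proof (intro ballI impI)
    fix x y assume "x \<in> f ` S" "y \<in> f ` S" "x \<noteq> y"
    then obtain p q where pq: "p \<in> S" "q \<in> S" "x = f p" "y = f q"
      by (meson imageE)
    then have "R p q \<or> R q p"
      using \<open>x \<noteq> y\<close> by (intro strict_chainD[OF chain]) auto
    then show "lt x y \<or> lt y x"
      using iso[OF pq(1,2)] iso[OF pq(2,1)] pq(3,4) by simp
  qed
qed

lemma strict_chain_linorder: "strict_chain (<) (A :: 'b::linorder set)"
  by (auto simp: strict_chain_def neq_iff)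

lemma pick_pos_less_iff:
  assumes "card R = k" "card C = k" "i < k" "j < k"
  shows "pos_less (pick R i, pick C i) (pick R j, pick C j) \<longleftrightarrow> i < j"
  using assms pick_mono_le[of i R j] pick_mono_le[of j R i] pick_mono_le[of j C i]
  by (cases i j rule: linorder_cases) (auto simp: pos_less_def)

lemma pick_eq_iff:
  assumes "card R = k" "i < k" "j < k"
  shows "pick R i = pick R j \<longleftrightarrow> i = j"
  using assms pick_mono_le[of i R j] pick_mono_le[of j R i]
  by (cases i j rule: linorder_cases) auto

lemma inj_on_pick:
  "card R = k \<Longrightarrow> inj_on (\<lambda>i. (pick R i, pick C i)) {..<k}"
  by (rule inj_onI) (simp add: pick_eq_iff)

lemma strict_chain_pick:
  assumes "card R = k" "card C = k"
  shows "strict_chain pos_less ((\<lambda>i. (pick R i, pick C i)) ` {..<k})"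
  using strict_chain_image_iff[OF inj_on_pick[OF assms(1)], of "(<)" pos_less]
    pick_pos_less_iff[OF assms] strict_chain_linorder by simp

lemma strict_chain_eq_pick_image:
  assumes "finite S" and chain: "strict_chain pos_less S"
  shows "card (fst ` S) = card S" and "card (snd ` S) = card S"
    and "(\<lambda>i. (pick (fst ` S) i, pick (snd ` S) i)) ` {..<card S} = S"
proof -
  have inj_fst: "inj_on fst S" and inj_snd: "inj_on snd S"
    using chain unfolding inj_on_def strict_chain_def pos_less_def by (metis less_irrefl)+
  show card_fst: "card (fst ` S) = card S" and card_snd: "card (snd ` S) = card S"
    using card_image inj_fst inj_snd by blast+
  have same_rank: "card {a \<in> fst ` S. a < fst p} = card {b \<in> snd ` S. b < snd p}" if "p \<in> S" for p
  proof -
    have "fst q < fst p \<longleftrightarrow> snd q < snd p" if "q \<in> S" for q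
      using strict_chainD[OF chain that \<open>p \<in> S\<close>] by (cases "q = p") (auto simp: pos_less_def)
    then have "{q \<in> S. fst q < fst p} = {q \<in> S. snd q < snd p}"
      by blast
    moreover have "{a \<in> fst ` S. a < fst p} = fst ` {q \<in> S. fst q < fst p}"
      and "{b \<in> snd ` S. b < snd p} = snd ` {q \<in> S. snd q < snd p}"
      by auto
    ultimately show ?thesis
      using inj_on_subset[OF inj_fst] inj_on_subset[OF inj_snd] by (simp add: card_image)
  qed
  have "p \<in> (\<lambda>i. (pick (fst ` S) i, pick (snd ` S) i)) ` {..<card S}" if "p \<in> S" for p
  proof (rule image_eqI)
    have "pick (fst ` S) (card {a \<in> fst ` S. a < fst p}) = fst p"
      using that by (simp add: pick_card_in_set)
    moreover have "pick (snd ` S) (card {a \<in> fst ` S. a < fst p}) = snd p"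
      unfolding same_rank[OF that] using that by (simp add: pick_card_in_set)
    ultimately show "p = (pick (fst ` S) (card {a \<in> fst ` S. a < fst p}),
        pick (snd ` S) (card {a \<in> fst ` S. a < fst p}))"
      by simp
    have "{a \<in> fst ` S. a < fst p} \<subset> fst ` S"
      using that by auto
    then have "card {a \<in> fst ` S. a < fst p} < card (fst ` S)"
      using \<open>finite S\<close> by (intro psubset_card_mono) simp_all
    then show "card {a \<in> fst ` S. a < fst p} \<in> {..<card S}"
      using card_fst by simp
  qed
  then show "(\<lambda>i. (pick (fst ` S) i, pick (snd ` S) i)) ` {..<card S} = S"
    using card_image_le[of "{..<card S}"] by (intro card_seteq[symmetric]) (simp_all add: subset_iff)
qed

lemma pick_less_of_subset: "R \<subseteq> {..<d} \<Longrightarrow> card R = k \<Longrightarrow> i < k \<Longrightarrow> pick R i < d"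
  using pick_in_set_le[of i R] by auto

lemma submatrix_map_mat_eq:
  assumes R: "R \<subseteq> {..<dim_row A}" and C: "C \<subseteq> {..<dim_col A}" and "card R = k" "card C = k"
  shows "submatrix (map_mat f A) R C = mat k k (\<lambda>(i, j). f (A $$ (pick R i, pick C j)))"
proof -
  have "{i. i < dim_row A \<and> i \<in> R} = R" "{j. j < dim_col A \<and> j \<in> C} = C"
    using R C by auto
  then have card_R: "card {i. i < dim_row A \<and> i \<in> R} = k"
    and card_C: "card {j. j < dim_col A \<and> j \<in> C} = k"
    using assms(3,4) by simp_all
  show ?thesis
  proof (rule eq_matI)
    fix i j assume "i < dim_row (mat k k (\<lambda>(i, j). f (A $$ (pick R i, pick C j))))"
      "j < dim_col (mat k k (\<lambda>(i, j). f (A $$ (pick R i, pick C j))))"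
    then have "i < k" "j < k"
      by simp_all
    have "submatrix (map_mat f A) R C $$ (i, j) = map_mat f A $$ (pick R i, pick C j)"
      by (rule submatrix_index) (simp_all add: card_R card_C \<open>i < k\<close> \<open>j < k\<close>)
    then show "submatrix (map_mat f A) R C $$ (i, j) = mat k k (\<lambda>(i, j). f (A $$ (pick R i, pick C j))) $$ (i, j)"
      using pick_less_of_subset[OF R assms(3) \<open>i < k\<close>] pick_less_of_subset[OF C assms(4) \<open>j < k\<close>]
        \<open>i < k\<close> \<open>j < k\<close> by simp
  qed (simp_all add: dim_submatrix card_R card_C)
qed

locale distinct_var_matrix =
  fixes Q :: "var set" and ord :: "(var \<times> var) set" and A :: "var mat"
  assumes order: "strict_linear_order_on Q ord"
    and elements_in: "elements_mat A \<subseteq> Q"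
    and entries_inj: "inj_on (\<lambda>p. A $$ p) (positions A)"
    and consistent: "consistent ord A"
begin

lemma decreasing_square_minor:
  assumes R: "R \<subseteq> {..<dim_row A}" and C: "C \<subseteq> {..<dim_col A}" and "card R = k" "card C = k"
  shows "decreasing_square Q ord k (\<lambda>i j. A $$ (pick R i, pick C j))"
proof
  note pick_R = pick_less_of_subset[OF R assms(3)] and pick_C = pick_less_of_subset[OF C assms(4)]
  have row: "\<And>i j j'. \<lbrakk>i < dim_row A; j < j'; j' < dim_col A\<rbrakk> \<Longrightarrow> (A $$ (i, j), A $$ (i, j')) \<in> ord"
    and col: "\<And>i i' j. \<lbrakk>i < i'; i' < dim_row A; j < dim_col A\<rbrakk> \<Longrightarrow> (A $$ (i, j), A $$ (i', j)) \<in> ord"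
    using consistent unfolding consistent_def by auto
  show "A $$ (pick R i, pick C j) \<in> Q" if "i < k" "j < k" for i j
  proof -
    have "(pick R i, pick C j) \<in> positions A"
      unfolding positions_def using pick_R[OF that(1)] pick_C[OF that(2)] by simp
    then have "A $$ (pick R i, pick C j) \<in> elements_mat A"
      unfolding elements_mat_eq_image by (rule imageI)
    then show ?thesis
      by (rule subsetD[OF elements_in])
  qed
  show "i = i' \<and> j = j'"
    if "i < k" "j < k" "i' < k" "j' < k" "A $$ (pick R i, pick C j) = A $$ (pick R i', pick C j')"
    for i j i' j'
  proof -
    have "(pick R i, pick C j) \<in> positions A" "(pick R i', pick C j') \<in> positions A"
      unfolding positions_def using pick_R pick_C that(1-4) by simp_all
    then have "(pick R i, pick C j) = (pick R i', pick C j')"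
      by (rule inj_onD[OF entries_inj that(5)])
    then show ?thesis
      using pick_eq_iff[OF assms(3) that(1,3)] pick_eq_iff[OF assms(4) that(2,4)] by simp
  qed
  show "(A $$ (pick R i, pick C j), A $$ (pick R i, pick C j')) \<in> ord"
    if "i < k" "j < j'" "j' < k" for i j j'
    using pick_mono_le[of j' C j] that(2,3) assms(4)
    by (intro row[OF pick_R[OF that(1)] _ pick_C[OF that(3)]]) simp
  show "(A $$ (pick R i, pick C j), A $$ (pick R i', pick C j)) \<in> ord"
    if "i < i'" "i' < k" "j < k" for i i' j
    using pick_mono_le[of i' R i] that(1,2) assms(3)
    by (intro col[OF _ pick_R[OF that(2)] pick_C[OF that(3)]]) simp
qed (rule order)

lemma LM_minor:
  assumes "R \<subseteq> {..<dim_row A}" "C \<subseteq> {..<dim_col A}" "card R = k" "card C = k"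
  shows "LM ord (det (submatrix (map_mat Var A) R C) :: 'a::comm_ring_1 mpoly) =
    mon_of_set ((\<lambda>i. A $$ (pick R i, pick C i)) ` {..<k})"
  unfolding submatrix_map_mat_eq[OF assms]
  by (rule decreasing_square.LM_det[OF decreasing_square_minor[OF assms]])

lemma pos_chain_minor:
  assumes S: "S \<subseteq> positions A" "strict_chain pos_less S" "card S = k"
  shows "det (submatrix (map_mat Var A) (fst ` S) (snd ` S)) \<in> (minors k A :: 'a::comm_ring_1 mpoly set)"
    and "LM ord (det (submatrix (map_mat Var A) (fst ` S) (snd ` S)) :: 'a mpoly) =
      mon_of_set ((\<lambda>p. A $$ p) ` S)"
proof -
  have "finite S"
    using S(1) finite_subset by (auto simp: positions_def)
  note pick_S = strict_chain_eq_pick_image[OF this S(2)]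
  have R: "fst ` S \<subseteq> {..<dim_row A}" and C: "snd ` S \<subseteq> {..<dim_col A}"
    using S(1) by (auto simp: positions_def)
  show "det (submatrix (map_mat Var A) (fst ` S) (snd ` S)) \<in> (minors k A :: 'a mpoly set)"
    unfolding minors_def using R C pick_S(1,2) S(3) by auto
  have "LM ord (det (submatrix (map_mat Var A) (fst ` S) (snd ` S)) :: 'a mpoly) =
      mon_of_set ((\<lambda>i. A $$ (pick (fst ` S) i, pick (snd ` S) i)) ` {..<k})"
    using LM_minor[OF R C] pick_S(1,2) S(3) by simp
  also have "\<dots> = mon_of_set ((\<lambda>p. A $$ p) ` S)"
    using arg_cong[OF pick_S(3), of "image (\<lambda>p. A $$ p)"] S(3) unfolding image_image by simp
  finally show "LM ord (det (submatrix (map_mat Var A) (fst ` S) (snd ` S)) :: 'a mpoly) =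
      mon_of_set ((\<lambda>p. A $$ p) ` S)" .
qed

lemma LM_minors_eq_pos_chains:
  "LM ord ` (minors k A :: 'a::comm_ring_1 mpoly set) =
    (\<lambda>S. mon_of_set ((\<lambda>p. A $$ p) ` S)) ` {S. S \<subseteq> positions A \<and> strict_chain pos_less S \<and> card S = k}"
proof (rule Set.set_eqI, rule iffI)
  fix mon assume "mon \<in> LM ord ` (minors k A :: 'a mpoly set)"
  then obtain R C where RC: "R \<subseteq> {..<dim_row A}" "C \<subseteq> {..<dim_col A}" "card R = k" "card C = k"
    and mon: "mon = LM ord (det (submatrix (map_mat Var A) R C) :: 'a mpoly)"
    unfolding minors_def by auto
  define S where "S = (\<lambda>i. (pick R i, pick C i)) ` {..<k}"
  have "S \<subseteq> positions A" "strict_chain pos_less S" "card S = k"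
    unfolding S_def positions_def
    using pick_less_of_subset[OF RC(1,3)] pick_less_of_subset[OF RC(2,4)]
      strict_chain_pick[OF RC(3,4)] card_image[OF inj_on_pick[OF RC(3)]] by auto
  moreover have "mon = mon_of_set ((\<lambda>p. A $$ p) ` S)"
    unfolding mon LM_minor[OF RC] S_def image_image by simp
  ultimately show "mon \<in> (\<lambda>S. mon_of_set ((\<lambda>p. A $$ p) ` S)) `
      {S. S \<subseteq> positions A \<and> strict_chain pos_less S \<and> card S = k}"
    by (intro image_eqI[of _ _ S]) simp_all
next
  fix mon assume "mon \<in> (\<lambda>S. mon_of_set ((\<lambda>p. A $$ p) ` S)) `
      {S. S \<subseteq> positions A \<and> strict_chain pos_less S \<and> card S = k}"
  then obtain S where "S \<subseteq> positions A" "strict_chain pos_less S" "card S = k"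
    and mon: "mon = mon_of_set ((\<lambda>p. A $$ p) ` S)"
    by auto
  from pos_chain_minor[OF this(1-3)] show "mon \<in> LM ord ` (minors k A :: 'a mpoly set)"
    unfolding mon by (metis image_eqI)
qed

lemma LM_minors_eq_chains:
  assumes iso: "\<And>p q. p \<in> positions A \<Longrightarrow> q \<in> positions A \<Longrightarrow> pos_less p q \<longleftrightarrow> lt (A $$ p) (A $$ q)"
  shows "LM ord ` (minors k A :: 'a::comm_ring_1 mpoly set) =
    mon_of_set ` {V. V \<subseteq> elements_mat A \<and> strict_chain lt V \<and> card V = k}"
proof -
  have chain_card: "strict_chain lt ((\<lambda>p. A $$ p) ` S) \<longleftrightarrow> strict_chain pos_less S"
    "card ((\<lambda>p. A $$ p) ` S) = card S" if "S \<subseteq> positions A" for S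
  proof -
    have inj: "inj_on (\<lambda>p. A $$ p) S"
      using entries_inj that by (rule inj_on_subset)
    show "strict_chain lt ((\<lambda>p. A $$ p) ` S) \<longleftrightarrow> strict_chain pos_less S"
      by (rule strict_chain_image_iff[OF inj], rule iso) (use that in auto)
    show "card ((\<lambda>p. A $$ p) ` S) = card S"
      using inj by (rule card_image)
  qed
  have "{V. V \<subseteq> elements_mat A \<and> strict_chain lt V \<and> card V = k} =
      (\<lambda>S. (\<lambda>p. A $$ p) ` S) ` {S. S \<subseteq> positions A \<and> strict_chain pos_less S \<and> card S = k}"
  proof (rule Set.set_eqI, rule iffI)
    fix V assume V: "V \<in> {V. V \<subseteq> elements_mat A \<and> strict_chain lt V \<and> card V = k}"
    define S where "S = positions A \<inter> (\<lambda>p. A $$ p) -` V"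
    have "V = (\<lambda>p. A $$ p) ` S" "S \<subseteq> positions A"
      using V unfolding S_def elements_mat_eq_image by auto
    then show "V \<in> (\<lambda>S. (\<lambda>p. A $$ p) ` S) `
        {S. S \<subseteq> positions A \<and> strict_chain pos_less S \<and> card S = k}"
      using V chain_card by auto
  next
    fix V assume "V \<in> (\<lambda>S. (\<lambda>p. A $$ p) ` S) `
        {S. S \<subseteq> positions A \<and> strict_chain pos_less S \<and> card S = k}"
    then obtain S where "S \<subseteq> positions A" "strict_chain pos_less S" "card S = k" "V = (\<lambda>p. A $$ p) ` S"
      by auto
    then show "V \<in> {V. V \<subseteq> elements_mat A \<and> strict_chain lt V \<and> card V = k}"
      using chain_card unfolding elements_mat_eq_image by auto
  qed
  then show ?thesis
    by (simp add: LM_minors_eq_pos_chains image_image)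
qed

end

section \<open>The matrices of a bipartite quiver\<close>

abbreviation var_row :: "var \<Rightarrow> nat" where "var_row x \<equiv> fst x"
abbreviation var_col :: "var \<Rightarrow> nat" where "var_col x \<equiv> fst (snd x)"
abbreviation var_arrow :: "var \<Rightarrow> nat" where "var_arrow x \<equiv> snd (snd x)"

text \<open>Two entries of a sink matrix lie on a common increasing diagonal iff they are
  \<open>sink_less\<close>-comparable, because its columns are ordered by arrow first and then by
  column within the block of that arrow.  Dually, the rows of a source matrix are ordered by
  arrow and then by row.\<close>

definition sink_less :: "var \<Rightarrow> var \<Rightarrow> bool" where
  "sink_less x y \<longleftrightarrow> var_row x < var_row y \<and>
     (var_arrow x < var_arrow y \<or> var_arrow x = var_arrow y \<and> var_col x < var_col y)"

definition source_less :: "var \<Rightarrow> var \<Rightarrow> bool" where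
  "source_less x y \<longleftrightarrow>
     (var_arrow x < var_arrow y \<or> var_arrow x = var_arrow y \<and> var_row x < var_row y) \<and> var_col x < var_col y"

definition sink_vars :: "nat \<Rightarrow> (nat \<Rightarrow> 'v) \<Rightarrow> (nat \<Rightarrow> 'v) \<Rightarrow> ('v \<Rightarrow> nat) \<Rightarrow> 'v \<Rightarrow> var set" where
  "sink_vars nr s t m \<gamma> =
    {x. var_arrow x < nr \<and> t (var_arrow x) = \<gamma> \<and> var_row x < m \<gamma> \<and> var_col x < m (s (var_arrow x))}"

definition source_vars :: "nat \<Rightarrow> (nat \<Rightarrow> 'v) \<Rightarrow> (nat \<Rightarrow> 'v) \<Rightarrow> ('v \<Rightarrow> nat) \<Rightarrow> 'v \<Rightarrow> var set" where
  "source_vars nr s t m \<gamma> =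
    {x. var_arrow x < nr \<and> s (var_arrow x) = \<gamma> \<and> var_col x < m \<gamma> \<and> var_row x < m (t (var_arrow x))}"

lemma sink_vars_subset_qvars: "sink_vars nr s t m \<gamma> \<subseteq> qvars nr s t m"
  by (auto simp: sink_vars_def qvars_def)

lemma source_vars_subset_qvars: "source_vars nr s t m \<gamma> \<subseteq> qvars nr s t m"
  by (auto simp: source_vars_def qvars_def)

text \<open>The (column, arrow) pairs indexing the columns of \<open>sink_mat\<close>, and the
  (row, arrow) pairs indexing the rows of \<open>source_mat\<close>.\<close>

definition block_list :: "nat \<Rightarrow> (nat \<Rightarrow> bool) \<Rightarrow> (nat \<Rightarrow> nat) \<Rightarrow> (nat \<times> nat) list" where
  "block_list nr P f = concat (map (\<lambda>k. map (\<lambda>j. (j, k)) [0..<f k]) (filter P [0..<nr]))"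

definition block_less :: "nat \<times> nat \<Rightarrow> nat \<times> nat \<Rightarrow> bool" where
  "block_less x y \<longleftrightarrow> snd x < snd y \<or> snd x = snd y \<and> fst x < fst y"

lemma set_block_list: "set (block_list nr P f) = {(j, k). k < nr \<and> P k \<and> j < f k}"
  by (auto simp: block_list_def)

lemma sorted_block_list: "sorted_wrt block_less (block_list nr P f)"
proof -
  have "sorted_wrt block_less (concat (map (\<lambda>k. map (\<lambda>j. (j, k)) [0..<f k]) ks))"
    if "sorted_wrt (<) ks" for ks
    using that
  proof (induction ks)
    case (Cons k ks)
    have "sorted_wrt block_less (map (\<lambda>j. (j, k)) [0..<f k])"
      unfolding sorted_wrt_map block_less_def by (rule sorted_wrt_mono_rel[of _ "(<)"]) auto
    then show ?case
      using Cons by (simp add: sorted_wrt_append) (auto simp: block_less_def)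
  qed simp
  then show ?thesis
    unfolding block_list_def by (simp add: sorted_wrt_filter)
qed

lemma asymp_block_less: "asymp block_less"
  by (rule asympI) (auto simp: block_less_def)

lemma sorted_wrt_nth_less_iff:
  assumes "sorted_wrt R xs" "asymp R" "i < length xs" "j < length xs"
  shows "R (xs ! i) (xs ! j) \<longleftrightarrow> i < j"
  using assms sorted_wrt_nth_less[OF assms(1)] asympD[OF assms(2)]
  by (cases i j rule: linorder_cases) (auto simp: asymp_on_def)

lemma sorted_wrt_nth_eq_iff:
  assumes "sorted_wrt R xs" "asymp R" "i < length xs" "j < length xs"
  shows "xs ! i = xs ! j \<longleftrightarrow> i = j"
  using sorted_wrt_nth_less_iff[OF assms] sorted_wrt_nth_less_iff[OF assms(1,2,4,3)]
  by (cases i j rule: linorder_cases) auto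


lemma sink_less_iff_block_less:
  "sink_less x y \<longleftrightarrow> var_row x < var_row y \<and> block_less (snd x) (snd y)"
  by (simp add: sink_less_def block_less_def)

lemma source_less_iff_block_less:
  "source_less x y \<longleftrightarrow> block_less (var_row x, var_arrow x) (var_row y, var_arrow y) \<and> var_col x < var_col y"
  by (simp add: source_less_def block_less_def)

lemma row_block_matrix:
  fixes L :: "(nat \<times> nat) list" and d :: nat
  assumes sorted: "sorted_wrt block_less L"
  defines "A \<equiv> mat d (length L) (\<lambda>(i, c). (i, L ! c))"
  shows "inj_on (\<lambda>p. A $$ p) (positions A)"
    and "elements_mat A = {x. var_row x < d \<and> snd x \<in> set L}"
    and "\<And>p q. p \<in> positions A \<Longrightarrow> q \<in> positions A \<Longrightarrow> pos_less p q \<longleftrightarrow> sink_less (A $$ p) (A $$ q)"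
proof -
  have entry: "A $$ p = (fst p, L ! snd p)" and pos: "fst p < d" "snd p < length L"
    if "p \<in> positions A" for p
    using that by (auto simp: A_def positions_def case_prod_beta)
  note nth_eq = sorted_wrt_nth_eq_iff[OF sorted asymp_block_less]
  note nth_less = sorted_wrt_nth_less_iff[OF sorted asymp_block_less]
  show "inj_on (\<lambda>p. A $$ p) (positions A)"
  proof (rule inj_onI)
    fix p q assume pq: "p \<in> positions A" "q \<in> positions A" "A $$ p = A $$ q"
    then have "fst p = fst q" "L ! snd p = L ! snd q"
      by (simp_all add: entry)
    then show "p = q"
      using nth_eq[OF pos(2)[OF pq(1)] pos(2)[OF pq(2)]] by (simp add: prod_eq_iff)
  qed
  show "elements_mat A = {x. var_row x < d \<and> snd x \<in> set L}"
    unfolding elements_mat_eq_image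
    by (auto simp: A_def positions_def in_set_conv_nth intro!: image_eqI)
  show "pos_less p q \<longleftrightarrow> sink_less (A $$ p) (A $$ q)"
    if "p \<in> positions A" "q \<in> positions A" for p q
    using that by (simp add: entry pos nth_less pos_less_def sink_less_iff_block_less)
qed

lemma column_block_matrix:
  fixes L :: "(nat \<times> nat) list" and d :: nat
  assumes sorted: "sorted_wrt block_less L"
  defines "B \<equiv> mat (length L) d (\<lambda>(r, j). (fst (L ! r), j, snd (L ! r)))"
  shows "inj_on (\<lambda>p. B $$ p) (positions B)"
    and "elements_mat B = {x. var_col x < d \<and> (var_row x, var_arrow x) \<in> set L}"
    and "\<And>p q. p \<in> positions B \<Longrightarrow> q \<in> positions B \<Longrightarrow> pos_less p q \<longleftrightarrow> source_less (B $$ p) (B $$ q)"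
proof -
  have entry: "B $$ p = (fst (L ! fst p), snd p, snd (L ! fst p))" and pos: "fst p < length L" "snd p < d"
    if "p \<in> positions B" for p
    using that by (auto simp: B_def positions_def case_prod_beta)
  note nth_eq = sorted_wrt_nth_eq_iff[OF sorted asymp_block_less]
  note nth_less = sorted_wrt_nth_less_iff[OF sorted asymp_block_less]
  show "inj_on (\<lambda>p. B $$ p) (positions B)"
  proof (rule inj_onI)
    fix p q assume pq: "p \<in> positions B" "q \<in> positions B" "B $$ p = B $$ q"
    then have "L ! fst p = L ! fst q" "snd p = snd q"
      by (simp_all add: entry prod_eq_iff)
    then show "p = q"
      using nth_eq[OF pos(1)[OF pq(1)] pos(1)[OF pq(2)]] by (simp add: prod_eq_iff)
  qed
  show "elements_mat B = {x. var_col x < d \<and> (var_row x, var_arrow x) \<in> set L}"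
    unfolding elements_mat_eq_image
    by (force simp: B_def positions_def in_set_conv_nth intro!: image_eqI)
  show "pos_less p q \<longleftrightarrow> source_less (B $$ p) (B $$ q)"
    if "p \<in> positions B" "q \<in> positions B" for p q
    using that by (simp add: entry pos nth_less pos_less_def source_less_iff_block_less)
qed


lemma sink_mat_eq_block_list:
  "sink_mat nr s t m \<gamma> =
    mat (m \<gamma>) (length (block_list nr (\<lambda>k. t k = \<gamma>) (\<lambda>k. m (s k))))
      (\<lambda>(i, c). (i, block_list nr (\<lambda>k. t k = \<gamma>) (\<lambda>k. m (s k)) ! c))"
  by (simp add: sink_mat_def block_list_def Let_def)

lemma source_mat_eq_block_list:
  "source_mat nr s t m \<gamma> =
    mat (length (block_list nr (\<lambda>k. s k = \<gamma>) (\<lambda>k. m (t k)))) (m \<gamma>)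
      (\<lambda>(r, j). (fst (block_list nr (\<lambda>k. s k = \<gamma>) (\<lambda>k. m (t k)) ! r), j,
                 snd (block_list nr (\<lambda>k. s k = \<gamma>) (\<lambda>k. m (t k)) ! r)))"
  by (simp add: source_mat_def block_list_def Let_def)

lemma elements_sink_mat: "elements_mat (sink_mat nr s t m \<gamma>) = sink_vars nr s t m \<gamma>"
  unfolding row_block_matrix(2)[OF sorted_block_list[of nr "\<lambda>k. t k = \<gamma>" "\<lambda>k. m (s k)"],
      where d = "m \<gamma>", folded sink_mat_eq_block_list] set_block_list sink_vars_def
  by auto

lemma elements_source_mat: "elements_mat (source_mat nr s t m \<gamma>) = source_vars nr s t m \<gamma>"
  unfolding column_block_matrix(2)[OF sorted_block_list[of nr "\<lambda>k. s k = \<gamma>" "\<lambda>k. m (t k)"],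
      where d = "m \<gamma>", folded source_mat_eq_block_list] set_block_list source_vars_def
  by auto

lemma finite_sink_vars: "finite (sink_vars nr s t m \<gamma>)"
  unfolding elements_sink_mat[symmetric] by (simp add: elements_mat_def)

lemma finite_source_vars: "finite (source_vars nr s t m \<gamma>)"
  unfolding elements_source_mat[symmetric] by (simp add: elements_mat_def)

theorem LM_minors_sink_mat:
  assumes "strict_linear_order_on (qvars nr s t m) ord" "consistent ord (sink_mat nr s t m \<gamma>)"
  shows "LM ord ` (minors k (sink_mat nr s t m \<gamma>) :: 'a::comm_ring_1 mpoly set) =
    mon_of_set ` {V. V \<subseteq> sink_vars nr s t m \<gamma> \<and> strict_chain sink_less V \<and> card V = k}"
proof -
  note layout = row_block_matrix[OF sorted_block_list[of nr "\<lambda>k. t k = \<gamma>" "\<lambda>k. m (s k)"], where d = "m \<gamma>",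
      folded sink_mat_eq_block_list]
  have "distinct_var_matrix (qvars nr s t m) ord (sink_mat nr s t m \<gamma>)"
    using assms layout(1) sink_vars_subset_qvars by unfold_locales (simp_all add: elements_sink_mat)
  from distinct_var_matrix.LM_minors_eq_chains[OF this layout(3)] show ?thesis
    unfolding elements_sink_mat .
qed

theorem LM_minors_source_mat:
  assumes "strict_linear_order_on (qvars nr s t m) ord" "consistent ord (source_mat nr s t m \<gamma>)"
  shows "LM ord ` (minors k (source_mat nr s t m \<gamma>) :: 'a::comm_ring_1 mpoly set) =
    mon_of_set ` {V. V \<subseteq> source_vars nr s t m \<gamma> \<and> strict_chain source_less V \<and> card V = k}"
proof -
  note layout = column_block_matrix[OF sorted_block_list[of nr "\<lambda>k. s k = \<gamma>" "\<lambda>k. m (t k)"], where d = "m \<gamma>",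
      folded source_mat_eq_block_list]
  have "distinct_var_matrix (qvars nr s t m) ord (source_mat nr s t m \<gamma>)"
    using assms layout(1) source_vars_subset_qvars by unfold_locales (simp_all add: elements_source_mat)
  from distinct_var_matrix.LM_minors_eq_chains[OF this layout(3)] show ?thesis
    unfolding elements_source_mat .
qed

section \<open>Exchanging segments of two chains\<close>

lemma sink_less_trans: "sink_less x y \<Longrightarrow> sink_less y z \<Longrightarrow> sink_less x z"
  by (auto simp: sink_less_def)

lemma sink_less_irrefl: "\<not> sink_less x x"
  by (simp add: sink_less_def)

lemma sink_less_asym: "sink_less x y \<Longrightarrow> \<not> sink_less y x"
  by (auto simp: sink_less_def)

lemma source_less_trans: "source_less x y \<Longrightarrow> source_less y z \<Longrightarrow> source_less x z"
  by (auto simp: source_less_def)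

lemma source_less_irrefl: "\<not> source_less x x"
  by (simp add: source_less_def)

lemma sink_less_iff_source_less:
  "var_arrow x = var_arrow y \<Longrightarrow> sink_less x y \<longleftrightarrow> source_less x y"
  by (auto simp: sink_less_def source_less_def)

lemma strict_chain_subset: "strict_chain lt V \<Longrightarrow> W \<subseteq> V \<Longrightarrow> strict_chain lt W"
  unfolding strict_chain_def by blast

lemma strict_chain_Un:
  assumes "strict_chain lt V" "strict_chain lt W"
    and comparable: "\<And>v w. v \<in> V \<Longrightarrow> w \<in> W \<Longrightarrow> lt v w \<or> lt w v"
  shows "strict_chain lt (V \<union> W)"
  unfolding strict_chain_def
proof (intro ballI impI)
  fix a b assume ab: "a \<in> V \<union> W" "b \<in> V \<union> W" "a \<noteq> b"
  then consider "a \<in> V" "b \<in> V" | "a \<in> W" "b \<in> W" | "a \<in> V" "b \<in> W" | "a \<in> W" "b \<in> V"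
    by auto
  then show "lt a b \<or> lt b a"
  proof cases
    case 1
    then show ?thesis using strict_chainD[OF assms(1) _ _ ab(3)] by simp
  next
    case 2
    then show ?thesis using strict_chainD[OF assms(2) _ _ ab(3)] by simp
  next
    case 3
    then show ?thesis using comparable[of a b] by simp
  next
    case 4
    then show ?thesis using comparable[of b a] by auto
  qed
qed

lemma strict_chain_exchange:
  assumes V: "finite V" "strict_chain lt V" and "finite W"
    and X: "X \<subseteq> V" "X \<inter> W = {}" "X \<noteq> {}"
    and Y: "Y \<subseteq> W" "Y \<inter> V = {}" "card Y = card X" "strict_chain lt Y"
    and comparable: "\<And>v c. v \<in> V - X \<Longrightarrow> c \<in> Y \<Longrightarrow> lt v c \<or> lt c v"
  shows "strict_chain lt ((V - X) \<union> Y)"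
    and "card ((V - X) \<union> Y) = card V"
    and "card (V \<inter> W) < card (((V - X) \<union> Y) \<inter> W)"
proof -
  have "finite X" "finite Y"
    using X(1) Y(1) V(1) \<open>finite W\<close> by (simp_all add: finite_subset)
  show "strict_chain lt ((V - X) \<union> Y)"
    using strict_chain_subset[OF V(2), of "V - X"] Y(4) comparable by (intro strict_chain_Un) auto
  have "card ((V - X) \<union> Y) = card (V - X) + card Y"
    using V(1) \<open>finite Y\<close> Y(2) by (intro card_Un_disjoint) auto
  also have "\<dots> = card V"
    using card_Diff_subset[OF \<open>finite X\<close> X(1)] card_mono[OF V(1) X(1)] Y(3) by simp
  finally show "card ((V - X) \<union> Y) = card V" .
  have "((V - X) \<union> Y) \<inter> W = (V \<inter> W) \<union> Y"
    using X(2) Y(1) by auto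
  moreover have "card ((V \<inter> W) \<union> Y) = card (V \<inter> W) + card Y"
    using V(1) \<open>finite Y\<close> Y(2) by (intro card_Un_disjoint) auto
  moreover have "card Y > 0"
    using Y(3) X(3) \<open>finite X\<close> by (simp add: card_gt_0_iff)
  ultimately show "card (V \<inter> W) < card (((V - X) \<union> Y) \<inter> W)"
    by simp
qed

definition chain_violation :: "var set \<Rightarrow> var set \<Rightarrow> var \<Rightarrow> var \<Rightarrow> var \<Rightarrow> bool" where
  "chain_violation VM VN x y w \<longleftrightarrow> x \<in> VM \<and> y \<in> VN \<and> w \<in> VM \<and> w \<in> VN \<and> x \<noteq> y \<and>
     var_arrow x = var_arrow w \<and> var_arrow y = var_arrow w \<and>
     var_row x \<le> var_row y \<and> var_row y < var_row w \<and> var_col y \<le> var_col x \<and> var_col x < var_col w"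

locale chain_pair =
  fixes VM VN :: "var set"
  assumes finite_VM: "finite VM" and finite_VN: "finite VN"
    and chain_VM: "strict_chain sink_less VM" and chain_VN: "strict_chain source_less VN"
begin

lemma sink_less_iff_row_less: "a \<in> VM \<Longrightarrow> b \<in> VM \<Longrightarrow> sink_less a b \<longleftrightarrow> var_row a < var_row b"
  using strict_chainD[OF chain_VM, of a b] by (cases "a = b") (auto simp: sink_less_def)

lemma card_sink_less_below:
  assumes "a \<in> VM" "sink_less a b"
  shows "card {c \<in> VM. sink_less c a} < card {c \<in> VM. sink_less c b}"
proof (rule psubset_card_mono)
  show "{c \<in> VM. sink_less c a} \<subset> {c \<in> VM. sink_less c b}"
  proof (rule psubsetI)
    show "{c \<in> VM. sink_less c a} \<subseteq> {c \<in> VM. sink_less c b}"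
      using sink_less_trans[OF _ assms(2)] by auto
    have "a \<in> {c \<in> VM. sink_less c b}" "a \<notin> {c \<in> VM. sink_less c a}"
      using assms sink_less_irrefl[of a] by simp_all
    then show "{c \<in> VM. sink_less c a} \<noteq> {c \<in> VM. sink_less c b}"
      by auto
  qed
qed (simp add: finite_VM)

lemma card_source_less_below:
  assumes "a \<in> VN" "source_less a b"
  shows "card {c \<in> VN. source_less c a} < card {c \<in> VN. source_less c b}"
proof (rule psubset_card_mono)
  show "{c \<in> VN. source_less c a} \<subset> {c \<in> VN. source_less c b}"
  proof (rule psubsetI)
    show "{c \<in> VN. source_less c a} \<subseteq> {c \<in> VN. source_less c b}"
      using source_less_trans[OF _ assms(2)] by auto
    have "a \<in> {c \<in> VN. source_less c b}" "a \<notin> {c \<in> VN. source_less c a}"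
      using assms source_less_irrefl[of a] by simp_all
    then show "{c \<in> VN. source_less c a} \<noteq> {c \<in> VN. source_less c b}"
      by auto
  qed
qed (simp add: finite_VN)

lemma obtain_minimal_violation:
  assumes "chain_violation VM VN x0 y0 w"
  obtains x y where "chain_violation VM VN x y w"
    and "\<And>x'. x' \<in> VM \<Longrightarrow> sink_less x' x \<Longrightarrow> \<not> chain_violation VM VN x' y w"
    and "\<And>y'. y' \<in> VN \<Longrightarrow> source_less y' y \<Longrightarrow> \<not> chain_violation VM VN x y' w"
proof -
  define rank where "rank q = card {c \<in> VM. sink_less c (fst q)} + card {c \<in> VN. source_less c (snd q)}" for q
  obtain q where q: "chain_violation VM VN (fst q) (snd q) w"
    and least: "\<And>q'. chain_violation VM VN (fst q') (snd q') w \<Longrightarrow> rank q \<le> rank q'"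
    using ex_has_least_nat[of "\<lambda>q. chain_violation VM VN (fst q) (snd q) w" "(x0, y0)" rank] assms by auto
  show ?thesis
  proof (rule that[OF q])
    fix x' assume "x' \<in> VM" "sink_less x' (fst q)"
    then have "rank (x', snd q) < rank q"
      using card_sink_less_below by (simp add: rank_def)
    then show "\<not> chain_violation VM VN x' (snd q) w"
      using least[of "(x', snd q)"] by auto
  next
    fix y' assume "y' \<in> VN" "source_less y' (snd q)"
    then have "rank (fst q, y') < rank q"
      using card_source_less_below by (simp add: rank_def)
    then show "\<not> chain_violation VM VN (fst q) y' w"
      using least[of "(fst q, y')"] by auto
  qed
qed

end

locale minimal_violation = chain_pair +
  fixes x y w :: var
  assumes violation: "chain_violation VM VN x y w"
    and x_minimal: "\<And>x'. x' \<in> VM \<Longrightarrow> sink_less x' x \<Longrightarrow> \<not> chain_violation VM VN x' y w"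
    and y_minimal: "\<And>y'. y' \<in> VN \<Longrightarrow> source_less y' y \<Longrightarrow> \<not> chain_violation VM VN x y' w"
begin

lemma violationD:
  "x \<in> VM" "y \<in> VN" "w \<in> VM" "w \<in> VN" "x \<noteq> y"
  "var_arrow x = var_arrow w" "var_arrow y = var_arrow w"
  "var_row x \<le> var_row y" "var_row y < var_row w" "var_col y \<le> var_col x" "var_col x < var_col w"
  using violation by (simp_all add: chain_violation_def)

lemma x_notin_VN: "x \<notin> VN"
proof
  assume "x \<in> VN"
  then have "source_less x y \<or> source_less y x"
    using strict_chainD[OF chain_VN _ violationD(2,5)] by simp
  then show False
    using violationD by (auto simp: source_less_def)
qed

lemma y_notin_VM: "y \<notin> VM"
proof
  assume "y \<in> VM"
  then have "sink_less x y \<or> sink_less y x"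
    using strict_chainD[OF chain_VM violationD(1) _ violationD(5)] by simp
  then show False
    using violationD by (auto simp: sink_less_def)
qed

text \<open>The first variable of \<open>VM \<inter> VN\<close> after \<open>x\<close>; the \<open>arg_min\<close> is not junk
  because \<open>w\<close> is a candidate.\<close>

definition z :: var where
  "z = arg_min var_row (\<lambda>c. c \<in> VM \<and> c \<in> VN \<and> sink_less x c)"

lemma z_facts: "z \<in> VM" "z \<in> VN" "sink_less x z"
  and z_first: "c \<in> VM \<Longrightarrow> c \<in> VN \<Longrightarrow> sink_less x c \<Longrightarrow> var_row z \<le> var_row c"
proof -
  have "w \<in> VM \<and> w \<in> VN \<and> sink_less x w"
    using violationD by (simp add: sink_less_def)
  then have least: "(z \<in> VM \<and> z \<in> VN \<and> sink_less x z) \<and>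
      (\<forall>c. c \<in> VM \<and> c \<in> VN \<and> sink_less x c \<longrightarrow> var_row z \<le> var_row c)"
    unfolding z_def by (rule arg_min_nat_lemma)
  then show "z \<in> VM" "z \<in> VN" "sink_less x z"
    by simp_all
  show "var_row z \<le> var_row c" if "c \<in> VM" "c \<in> VN" "sink_less x c"
    using conjunct2[OF least, rule_format, of c] that by simp
qed

lemma z_least: "c \<in> VM \<Longrightarrow> c \<in> VN \<Longrightarrow> sink_less x c \<Longrightarrow> c = z \<or> sink_less z c"
  using z_first[of c] sink_less_iff_row_less[OF z_facts(1), of c] strict_chainD[OF chain_VM z_facts(1), of c]
  by (auto simp: sink_less_def)

lemma z_arrow: "var_arrow z = var_arrow w"
  using z_least[OF violationD(3,4)] z_facts(3) violationD
  by (auto simp: sink_less_def)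

lemma y_before_z: "source_less y z"
proof -
  have "z \<noteq> y"
    using z_facts(1) y_notin_VM by auto
  then have "source_less y z \<or> source_less z y"
    using strict_chainD[OF chain_VN violationD(2) z_facts(2)] by simp
  moreover have "\<not> source_less z y"
    using z_facts(3) z_arrow violationD by (auto simp: sink_less_def source_less_def)
  ultimately show ?thesis
    by simp
qed

definition segment_M :: "var set" where
  "segment_M = {c \<in> VM. (c = x \<or> sink_less x c) \<and> sink_less c z}"

definition segment_N :: "var set" where
  "segment_N = {c \<in> VN. (c = y \<or> source_less y c) \<and> source_less c z}"

lemma x_in_segment_M: "x \<in> segment_M"
  using violationD(1) z_facts(3) by (simp add: segment_M_def)

lemma y_in_segment_N: "y \<in> segment_N"
  using violationD(2) y_before_z by (simp add: segment_N_def)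

lemma segment_M_arrow: "c \<in> segment_M \<Longrightarrow> var_arrow c = var_arrow w"
  using z_arrow violationD(6) by (auto simp: segment_M_def sink_less_def)

lemma segment_N_arrow: "c \<in> segment_N \<Longrightarrow> var_arrow c = var_arrow w"
  using z_arrow violationD(7) by (auto simp: segment_N_def source_less_def)

lemma segment_M_disjoint: "segment_M \<inter> VN = {}"
proof -
  have False if c: "c \<in> segment_M" "c \<in> VN" for c
  proof -
    have "c \<noteq> x"
      using c(2) x_notin_VN by auto
    then have "sink_less x c" "sink_less c z" "c \<in> VM"
      using c(1) by (auto simp: segment_M_def)
    then show False
      using z_least[OF \<open>c \<in> VM\<close> c(2)] sink_less_asym[of c z] sink_less_irrefl[of z] by auto
  qed
  then show ?thesis
    by auto
qed

lemma segment_N_disjoint: "segment_N \<inter> VM = {}"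
proof -
  have False if c: "c \<in> segment_N" "c \<in> VM" for c
  proof -
    have "c \<noteq> y"
      using c(2) y_notin_VM by auto
    then have yc: "source_less y c" and cz: "source_less c z" and "c \<in> VN"
      using c(1) by (auto simp: segment_N_def)
    have "c \<noteq> x"
      using \<open>c \<in> VN\<close> x_notin_VN by auto
    then have "sink_less x c \<or> sink_less c x"
      using strict_chainD[OF chain_VM violationD(1) c(2)] by simp
    moreover have "\<not> sink_less c x"
      using yc segment_N_arrow[OF c(1)] violationD by (auto simp: sink_less_def source_less_def)
    ultimately have "c = z \<or> sink_less z c"
      using z_least[OF c(2) \<open>c \<in> VN\<close>] by simp
    moreover have "sink_less c z"
      using cz segment_N_arrow[OF c(1)] z_arrow sink_less_iff_source_less by simp
    ultimately show False
      using sink_less_asym[of c z] sink_less_irrefl[of z] by auto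
  qed
  then show ?thesis
    by auto
qed

lemma below_x_before_segment_N:
  assumes m: "m \<in> VM" "sink_less m x" and c: "c \<in> segment_N"
  shows "sink_less m c"
proof (rule ccontr)
  assume "\<not> sink_less m c"
  have "c = y \<or> source_less y c"
    using c by (simp add: segment_N_def)
  then have "var_row y \<le> var_row c" "var_col y \<le> var_col c"
    using segment_N_arrow[OF c] violationD(7) by (auto simp: source_less_def)
  then have "chain_violation VM VN m y w"
    using m \<open>\<not> sink_less m c\<close> segment_N_arrow[OF c] violationD y_notin_VM
    by (auto simp: chain_violation_def sink_less_def)
  then show False
    using x_minimal[OF m] by simp
qed

lemma below_y_before_segment_M:
  assumes n: "n \<in> VN" "source_less n y" and c: "c \<in> segment_M"
  shows "source_less n c"
proof (rule ccontr)
  assume "\<not> source_less n c"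
  have "c = x \<or> sink_less x c"
    using c by (simp add: segment_M_def)
  then have "var_row x \<le> var_row c" "var_col x \<le> var_col c"
    using segment_M_arrow[OF c] violationD(6) by (auto simp: sink_less_def)
  then have "chain_violation VM VN x n w"
    using n \<open>\<not> source_less n c\<close> segment_M_arrow[OF c] violationD x_notin_VN
    by (auto simp: chain_violation_def source_less_def)
  then show False
    using y_minimal[OF n] by simp
qed

lemma comparable_with_segment_N:
  assumes m: "m \<in> VM - segment_M" and c: "c \<in> segment_N"
  shows "sink_less m c \<or> sink_less c m"
proof -
  have "m \<in> VM" "m \<noteq> x"
    using m x_in_segment_M by auto
  then have "sink_less m x \<or> sink_less x m"
    by (rule strict_chainD[OF chain_VM _ violationD(1)])
  then show ?thesis
  proof
    assume "sink_less m x"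
    then show ?thesis
      using below_x_before_segment_N \<open>m \<in> VM\<close> c by simp
  next
    assume "sink_less x m"
    then have "\<not> sink_less m z"
      using m by (simp add: segment_M_def)
    then have "m = z \<or> sink_less z m"
      using strict_chainD[OF chain_VM _ z_facts(1), of m] m by auto
    moreover have "sink_less c z"
      using c segment_N_arrow[OF c] z_arrow sink_less_iff_source_less
      by (simp add: segment_N_def)
    ultimately show ?thesis
      using sink_less_trans[OF \<open>sink_less c z\<close>, of m] by auto
  qed
qed

lemma comparable_with_segment_M:
  assumes n: "n \<in> VN - segment_N" and c: "c \<in> segment_M"
  shows "source_less n c \<or> source_less c n"
proof -
  have "n \<in> VN" "n \<noteq> y"
    using n y_in_segment_N by auto
  then have "source_less n y \<or> source_less y n"
    by (rule strict_chainD[OF chain_VN _ violationD(2)])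
  then show ?thesis
  proof
    assume "source_less n y"
    then show ?thesis
      using below_y_before_segment_M \<open>n \<in> VN\<close> c by simp
  next
    assume "source_less y n"
    then have "\<not> source_less n z"
      using n by (simp add: segment_N_def)
    then have "n = z \<or> source_less z n"
      using strict_chainD[OF chain_VN _ z_facts(2), of n] n by auto
    moreover have "source_less c z"
      using c segment_M_arrow[OF c] z_arrow sink_less_iff_source_less
      by (simp add: segment_M_def)
    ultimately show ?thesis
      using source_less_trans[OF \<open>source_less c z\<close>, of n] by auto
  qed
qed

lemma strict_chain_segment_N:
  assumes "Y \<subseteq> segment_N"
  shows "strict_chain sink_less Y"
  unfolding strict_chain_def
proof (intro ballI impI)
  fix a b assume ab: "a \<in> Y" "b \<in> Y" "a \<noteq> b"
  then have "a \<in> segment_N" "b \<in> segment_N"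
    using assms by auto
  then have "a \<in> VN" "b \<in> VN" "var_arrow a = var_arrow b"
    using segment_N_arrow by (auto simp: segment_N_def)
  then show "sink_less a b \<or> sink_less b a"
    using strict_chainD[OF chain_VN _ _ ab(3)] sink_less_iff_source_less[of a b] sink_less_iff_source_less[of b a]
    by simp
qed

lemma strict_chain_segment_M:
  assumes "X \<subseteq> segment_M"
  shows "strict_chain source_less X"
  unfolding strict_chain_def
proof (intro ballI impI)
  fix a b assume ab: "a \<in> X" "b \<in> X" "a \<noteq> b"
  then have "a \<in> segment_M" "b \<in> segment_M"
    using assms by auto
  then have "a \<in> VM" "b \<in> VM" "var_arrow a = var_arrow b"
    using segment_M_arrow by (auto simp: segment_M_def)
  then show "source_less a b \<or> source_less b a"
    using strict_chainD[OF chain_VM _ _ ab(3)] sink_less_iff_source_less[of a b] sink_less_iff_source_less[of b a]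
    by simp
qed

lemma exchange_into_VM:
  assumes "card segment_M \<le> card segment_N"
  shows "\<exists>V'. V' \<subseteq> VM \<union> VN \<and> strict_chain sink_less V' \<and> card V' = card VM \<and>
    card (VM \<inter> VN) < card (V' \<inter> VN) \<and> (\<forall>c\<in>V' - VM. var_arrow c = var_arrow w)"
proof -
  obtain Y where Y: "Y \<subseteq> segment_N" "card Y = card segment_M"
    using obtain_subset_with_card_n[OF assms] by metis
  have M: "segment_M \<subseteq> VM" "segment_M \<noteq> {}"
    using x_in_segment_M by (auto simp: segment_M_def simp del: Collect_empty_eq)
  have N: "Y \<subseteq> VN" "Y \<inter> VM = {}"
    using Y(1) segment_N_disjoint by (auto simp: segment_N_def)
  note exchange = strict_chain_exchange[OF finite_VM chain_VM finite_VN M(1) segment_M_disjoint M(2)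
      N Y(2) strict_chain_segment_N[OF Y(1)] comparable_with_segment_N]
  show ?thesis
  proof (intro exI conjI)
    show "(VM - segment_M) \<union> Y \<subseteq> VM \<union> VN" "\<forall>c\<in>(VM - segment_M) \<union> Y - VM. var_arrow c = var_arrow w"
      using \<open>Y \<subseteq> VN\<close> Y(1) segment_N_arrow by auto
  qed (use exchange Y(1) in auto)
qed

lemma exchange_into_VN:
  assumes "card segment_N \<le> card segment_M"
  shows "\<exists>V'. V' \<subseteq> VM \<union> VN \<and> strict_chain source_less V' \<and> card V' = card VN \<and>
    card (VM \<inter> VN) < card (V' \<inter> VM) \<and> (\<forall>c\<in>V' - VN. var_arrow c = var_arrow w)"
proof -
  obtain X where X: "X \<subseteq> segment_M" "card X = card segment_N"
    using obtain_subset_with_card_n[OF assms] by metis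
  have N: "segment_N \<subseteq> VN" "segment_N \<noteq> {}"
    using y_in_segment_N by (auto simp: segment_N_def simp del: Collect_empty_eq)
  have M: "X \<subseteq> VM" "X \<inter> VN = {}"
    using X(1) segment_M_disjoint by (auto simp: segment_M_def)
  note exchange = strict_chain_exchange[OF finite_VN chain_VN finite_VM N(1) segment_N_disjoint N(2)
      M X(2) strict_chain_segment_M[OF X(1)] comparable_with_segment_M]
  show ?thesis
  proof (intro exI conjI)
    show "(VN - segment_N) \<union> X \<subseteq> VM \<union> VN" "\<forall>c\<in>(VN - segment_N) \<union> X - VN. var_arrow c = var_arrow w"
      using \<open>X \<subseteq> VM\<close> X(1) segment_M_arrow by auto
  qed (use exchange X(1) in \<open>auto simp: Int_commute\<close>)
qed

lemma exchange:
  "(\<exists>V'. V' \<subseteq> VM \<union> VN \<and> strict_chain sink_less V' \<and> card V' = card VM \<and>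
      card (VM \<inter> VN) < card (V' \<inter> VN) \<and> (\<forall>c\<in>V' - VM. var_arrow c = var_arrow w)) \<or>
    (\<exists>V'. V' \<subseteq> VM \<union> VN \<and> strict_chain source_less V' \<and> card V' = card VN \<and>
      card (VM \<inter> VN) < card (V' \<inter> VM) \<and> (\<forall>c\<in>V' - VN. var_arrow c = var_arrow w))"
proof (cases "card segment_M \<le> card segment_N")
  case True
  then show ?thesis
    by (rule disjI1[OF exchange_into_VM])
next
  case False
  then show ?thesis
    by (intro disjI2 exchange_into_VN) simp
qed

end

lemma (in chain_pair) violation_exchange:
  assumes "chain_violation VM VN x0 y0 w"
  shows "(\<exists>V'. V' \<subseteq> VM \<union> VN \<and> strict_chain sink_less V' \<and> card V' = card VM \<and>
      card (VM \<inter> VN) < card (V' \<inter> VN) \<and> (\<forall>c\<in>V' - VM. var_arrow c = var_arrow w)) \<or>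
    (\<exists>V'. V' \<subseteq> VM \<union> VN \<and> strict_chain source_less V' \<and> card V' = card VN \<and>
      card (VM \<inter> VN) < card (V' \<inter> VM) \<and> (\<forall>c\<in>V' - VN. var_arrow c = var_arrow w))"
proof -
  obtain x y where "chain_violation VM VN x y w"
    and "\<And>x'. x' \<in> VM \<Longrightarrow> sink_less x' x \<Longrightarrow> \<not> chain_violation VM VN x' y w"
    and "\<And>y'. y' \<in> VN \<Longrightarrow> source_less y' y \<Longrightarrow> \<not> chain_violation VM VN x y' w"
    using obtain_minimal_violation[OF assms] by metis
  then have "minimal_violation VM VN x y w"
    using chain_pair_axioms by (simp add: minimal_violation_def minimal_violation_axioms_def)
  then show ?thesis
    by (rule minimal_violation.exchange)
qed

section \<open>Adjacent minors admit no violation\<close>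

lemma card_sym_diff:
  assumes "finite A" "finite B"
  shows "card ((A - B) \<union> (B - A)) = card A + card B - 2 * card (A \<inter> B)"
proof -
  have "card ((A - B) \<union> (B - A)) = card (A - B) + card (B - A)"
    using assms by (intro card_Un_disjoint) auto
  moreover have "card (A - B) = card A - card (A \<inter> B)" "card (B - A) = card B - card (A \<inter> B)"
    using assms by (simp_all add: card_Diff_subset_Int Int_commute)
  moreover have "card (A \<inter> B) \<le> card A" "card (A \<inter> B) \<le> card B"
    using assms by (simp_all add: card_mono)
  ultimately show ?thesis
    by simp
qed

lemma card_sym_diff_less:
  assumes "finite A" "finite B" "finite C" "card C = card A" "card (A \<inter> B) < card (C \<inter> B)"
  shows "card ((C - B) \<union> (B - C)) < card ((A - B) \<union> (B - A))"
proof -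
  have "card (C \<inter> B) \<le> card B" "card (C \<inter> B) \<le> card C"
    using assms(2,3) by (simp_all add: card_mono)
  then show ?thesis
    using assms card_sym_diff[OF assms(1,2)] card_sym_diff[OF assms(3,2)] by simp
qed

lemma adjacent_no_closer_left_minor:
  fixes M N P :: "'a::comm_ring_1 mpoly"
  assumes adj: "adjacent ord u A v B M N"
    and M: "LM ord M = mon_of_set VM" and N: "LM ord N = mon_of_set VN" and fin: "finite VM" "finite VN"
    and P: "P \<in> minors u A" "LM ord P = mon_of_set V'"
    and V': "V' \<subseteq> VM \<union> VN" "card V' = card VM"
  shows "card (V' \<inter> VN) \<le> card (VM \<inter> VN)"
proof (rule ccontr)
  assume "\<not> card (V' \<inter> VN) \<le> card (VM \<inter> VN)"
  have "finite V'"
    using V'(1) fin finite_subset by auto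
  have "P \<in> minors_L ord (mon_lcm (LM ord M) (LM ord N)) u A"
    unfolding minors_L_def M N using P mon_dvd_lcm_mon_of_set[OF fin V'(1)] by simp
  moreover have "dist_LM ord P N < dist_LM ord M N"
    unfolding dist_LM_def Vset_def M N P(2) keys_mon_of_set[OF fin(1)] keys_mon_of_set[OF fin(2)]
      keys_mon_of_set[OF \<open>finite V'\<close>]
    using card_sym_diff_less[OF fin \<open>finite V'\<close> V'(2)] \<open>\<not> _ \<le> _\<close> by simp
  ultimately show False
    using adj unfolding adjacent_def Let_def by auto
qed

lemma adjacent_no_closer_right_minor:
  fixes M N Q :: "'a::comm_ring_1 mpoly"
  assumes adj: "adjacent ord u A v B M N"
    and M: "LM ord M = mon_of_set VM" and N: "LM ord N = mon_of_set VN" and fin: "finite VM" "finite VN"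
    and Q: "Q \<in> minors v B" "LM ord Q = mon_of_set V'"
    and V': "V' \<subseteq> VM \<union> VN" "card V' = card VN"
  shows "card (V' \<inter> VM) \<le> card (VM \<inter> VN)"
proof (rule ccontr)
  assume "\<not> card (V' \<inter> VM) \<le> card (VM \<inter> VN)"
  have "finite V'"
    using V'(1) fin finite_subset by auto
  have "Q \<in> minors_L ord (mon_lcm (LM ord M) (LM ord N)) v B"
    unfolding minors_L_def M N using Q mon_dvd_lcm_mon_of_set[OF fin V'(1)] by simp
  moreover have "dist_LM ord M Q < dist_LM ord M N"
    unfolding dist_LM_def Vset_def M N Q(2) keys_mon_of_set[OF fin(1)] keys_mon_of_set[OF fin(2)]
      keys_mon_of_set[OF \<open>finite V'\<close>]
    using card_sym_diff_less[OF fin(2,1) \<open>finite V'\<close> V'(2)] \<open>\<not> _ \<le> _\<close>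
    by (simp add: Un_commute Int_commute)
  ultimately show False
    using adj unfolding adjacent_def Let_def by auto
qed

lemma violation_imp_chain_violation:
  "violation ord M N p1 p2 p3 \<Longrightarrow> chain_violation (Vset ord M) (Vset ord N) p1 p2 p3"
  by (cases p1, cases p2, cases p3) (simp add: violation_def chain_violation_def)

lemma exchange_subset_sink_vars:
  assumes V': "V' \<subseteq> VM \<union> VN" "\<forall>c\<in>V' - VM. var_arrow c = var_arrow w" and "w \<in> VM"
    and VM: "VM \<subseteq> sink_vars nr s t m \<gamma>" and VN: "VN \<subseteq> source_vars nr s t m \<gamma>'"
  shows "V' \<subseteq> sink_vars nr s t m \<gamma>"
proof
  fix c assume "c \<in> V'"
  show "c \<in> sink_vars nr s t m \<gamma>"
  proof (cases "c \<in> VM")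
    case False
    then have "c \<in> source_vars nr s t m \<gamma>'" "var_arrow c = var_arrow w" "w \<in> sink_vars nr s t m \<gamma>"
      using \<open>c \<in> V'\<close> V' \<open>w \<in> VM\<close> VM VN by auto
    then show ?thesis
      by (simp add: sink_vars_def source_vars_def)
  qed (use VM VN in auto)
qed

lemma exchange_subset_source_vars:
  assumes V': "V' \<subseteq> VM \<union> VN" "\<forall>c\<in>V' - VN. var_arrow c = var_arrow w" and "w \<in> VN"
    and VM: "VM \<subseteq> sink_vars nr s t m \<gamma>" and VN: "VN \<subseteq> source_vars nr s t m \<gamma>'"
  shows "V' \<subseteq> source_vars nr s t m \<gamma>'"
proof
  fix c assume "c \<in> V'"
  show "c \<in> source_vars nr s t m \<gamma>'"
  proof (cases "c \<in> VN")
    case False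
    then have "c \<in> sink_vars nr s t m \<gamma>" "var_arrow c = var_arrow w" "w \<in> source_vars nr s t m \<gamma>'"
      using \<open>c \<in> V'\<close> V' \<open>w \<in> VN\<close> VM VN by auto
    then show ?thesis
      by (simp add: sink_vars_def source_vars_def)
  qed (use VM VN in auto)
qed

lemma LM_sink_minorE:
  fixes M :: "'a::comm_ring_1 mpoly"
  assumes "strict_linear_order_on (qvars nr s t m) ord" "consistent ord (sink_mat nr s t m \<gamma>)"
    and "M \<in> minors u (sink_mat nr s t m \<gamma>)"
  obtains VM where "VM \<subseteq> sink_vars nr s t m \<gamma>" "strict_chain sink_less VM" "card VM = u"
    "finite VM" "LM ord M = mon_of_set VM"
proof -
  have "LM ord M \<in> mon_of_set ` {V. V \<subseteq> sink_vars nr s t m \<gamma> \<and> strict_chain sink_less V \<and> card V = u}"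
    using imageI[OF assms(3), of "LM ord"] unfolding LM_minors_sink_mat[OF assms(1,2)] .
  then obtain VM where VM: "VM \<subseteq> sink_vars nr s t m \<gamma>" "strict_chain sink_less VM" "card VM = u"
    "LM ord M = mon_of_set VM"
    by auto
  moreover have "finite VM"
    using finite_subset[OF VM(1) finite_sink_vars] .
  ultimately show ?thesis
    using that by simp
qed

lemma LM_source_minorE:
  fixes N :: "'a::comm_ring_1 mpoly"
  assumes "strict_linear_order_on (qvars nr s t m) ord" "consistent ord (source_mat nr s t m \<gamma>)"
    and "N \<in> minors v (source_mat nr s t m \<gamma>)"
  obtains VN where "VN \<subseteq> source_vars nr s t m \<gamma>" "strict_chain source_less VN" "card VN = v"
    "finite VN" "LM ord N = mon_of_set VN"
proof -
  have "LM ord N \<in> mon_of_set ` {V. V \<subseteq> source_vars nr s t m \<gamma> \<and> strict_chain source_less V \<and> card V = v}"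
    using imageI[OF assms(3), of "LM ord"] unfolding LM_minors_source_mat[OF assms(1,2)] .
  then obtain VN where VN: "VN \<subseteq> source_vars nr s t m \<gamma>" "strict_chain source_less VN" "card VN = v"
    "LM ord N = mon_of_set VN"
    by auto
  moreover have "finite VN"
    using finite_subset[OF VN(1) finite_source_vars] .
  ultimately show ?thesis
    using that by simp
qed

lemma adjacent_no_sink_exchange:
  fixes M N :: "'a::comm_ring_1 mpoly"
  assumes order: "strict_linear_order_on (qvars nr s t m) ord"
    and consistent: "consistent ord (sink_mat nr s t m \<gamma>1)"
    and adjacent: "adjacent ord u (sink_mat nr s t m \<gamma>1) v B M N"
    and VM: "VM \<subseteq> sink_vars nr s t m \<gamma>1" "card VM = u" "finite VM" "LM ord M = mon_of_set VM"
    and VN: "VN \<subseteq> source_vars nr s t m \<gamma>2" "finite VN" "LM ord N = mon_of_set VN"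
    and V': "V' \<subseteq> VM \<union> VN" "strict_chain sink_less V'" "card V' = card VM"
      "\<forall>c\<in>V' - VM. var_arrow c = var_arrow w" "w \<in> VM"
  shows "card (V' \<inter> VN) \<le> card (VM \<inter> VN)"
proof -
  have "V' \<subseteq> sink_vars nr s t m \<gamma>1"
    using exchange_subset_sink_vars[OF V'(1,4,5) VM(1) VN(1)] .
  then have "mon_of_set V' \<in> LM ord ` (minors u (sink_mat nr s t m \<gamma>1) :: 'a mpoly set)"
    unfolding LM_minors_sink_mat[OF order consistent] using V'(2,3) VM(2) by auto
  then obtain P :: "'a mpoly" where "P \<in> minors u (sink_mat nr s t m \<gamma>1)" "LM ord P = mon_of_set V'"
    by auto
  from adjacent_no_closer_left_minor[OF adjacent VM(4) VN(3) VM(3) VN(2) this V'(1,3)] show ?thesis .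
qed

lemma adjacent_no_source_exchange:
  fixes M N :: "'a::comm_ring_1 mpoly"
  assumes order: "strict_linear_order_on (qvars nr s t m) ord"
    and consistent: "consistent ord (source_mat nr s t m \<gamma>2)"
    and adjacent: "adjacent ord u A v (source_mat nr s t m \<gamma>2) M N"
    and VM: "VM \<subseteq> sink_vars nr s t m \<gamma>1" "finite VM" "LM ord M = mon_of_set VM"
    and VN: "VN \<subseteq> source_vars nr s t m \<gamma>2" "card VN = v" "finite VN" "LM ord N = mon_of_set VN"
    and V': "V' \<subseteq> VM \<union> VN" "strict_chain source_less V'" "card V' = card VN"
      "\<forall>c\<in>V' - VN. var_arrow c = var_arrow w" "w \<in> VN"
  shows "card (V' \<inter> VM) \<le> card (VM \<inter> VN)"
proof -
  have "V' \<subseteq> source_vars nr s t m \<gamma>2"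
    using exchange_subset_source_vars[OF V'(1,4,5) VM(1) VN(1)] .
  then have "mon_of_set V' \<in> LM ord ` (minors v (source_mat nr s t m \<gamma>2) :: 'a mpoly set)"
    unfolding LM_minors_source_mat[OF order consistent] using V'(2,3) VN(2) by auto
  then obtain Q :: "'a mpoly" where "Q \<in> minors v (source_mat nr s t m \<gamma>2)" "LM ord Q = mon_of_set V'"
    by auto
  from adjacent_no_closer_right_minor[OF adjacent VM(3) VN(4) VM(2) VN(3) this V'(1,3)] show ?thesis .
qed

theorem adjacent_minors_no_violation:
  fixes M N :: "'a::comm_ring_1 mpoly"
  assumes order: "strict_linear_order_on (qvars nr s t m) ord"
    and consistent: "consistent ord (sink_mat nr s t m \<gamma>1)" "consistent ord (source_mat nr s t m \<gamma>2)"
    and minors: "M \<in> minors u (sink_mat nr s t m \<gamma>1)" "N \<in> minors v (source_mat nr s t m \<gamma>2)"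
    and adjacent: "adjacent ord u (sink_mat nr s t m \<gamma>1) v (source_mat nr s t m \<gamma>2) M N"
  shows "\<not> violation ord M N p1 p2 p3"
proof
  assume violation: "violation ord M N p1 p2 p3"
  obtain VM where VM: "VM \<subseteq> sink_vars nr s t m \<gamma>1" "strict_chain sink_less VM" "card VM = u"
    "finite VM" "LM ord M = mon_of_set VM"
    using LM_sink_minorE[OF order consistent(1) minors(1)] .
  obtain VN where VN: "VN \<subseteq> source_vars nr s t m \<gamma>2" "strict_chain source_less VN" "card VN = v"
    "finite VN" "LM ord N = mon_of_set VN"
    using LM_source_minorE[OF order consistent(2) minors(2)] .
  have cv: "chain_violation VM VN p1 p2 p3"
    using violation_imp_chain_violation[OF violation]
    unfolding Vset_def VM(5) VN(5) keys_mon_of_set[OF VM(4)] keys_mon_of_set[OF VN(4)] .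
  then have "p3 \<in> VM" "p3 \<in> VN"
    by (simp_all add: chain_violation_def)
  have "chain_pair VM VN"
    using VM(2,4) VN(2,4) by unfold_locales
  from chain_pair.violation_exchange[OF this cv] show False
  proof (elim disjE exE conjE)
    fix V' assume V': "V' \<subseteq> VM \<union> VN" "strict_chain sink_less V'" "card V' = card VM"
      "card (VM \<inter> VN) < card (V' \<inter> VN)" "\<forall>c\<in>V' - VM. var_arrow c = var_arrow p3"
    show False
      using adjacent_no_sink_exchange[OF order consistent(1) adjacent VM(1,3-5) VN(1,4,5) V'(1-3,5)
          \<open>p3 \<in> VM\<close>] V'(4)
      by simp
  next
    fix V' assume V': "V' \<subseteq> VM \<union> VN" "strict_chain source_less V'" "card V' = card VN"
      "card (VM \<inter> VN) < card (V' \<inter> VM)" "\<forall>c\<in>V' - VN. var_arrow c = var_arrow p3"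
    show False
      using adjacent_no_source_exchange[OF order consistent(2) adjacent VM(1,4,5) VN(1,3-5) V'(1-3,5)
          \<open>p3 \<in> VN\<close>] V'(4)
      by simp
  qed
qed

theorem proposition2p24:
  fixes nr :: nat and s t :: "nat \<Rightarrow> 'v" and m :: "'v \<Rightarrow> nat"
    and ord :: "(var \<times> var) set" and k0 u v :: nat
    and M N :: "'a::field mpoly"
  assumes "bipartite_quiver nr s t"
    and "strict_linear_order_on (qvars nr s t m) ord"
    and "\<forall>\<gamma>. consistent ord (sink_mat nr s t m \<gamma>) \<and> consistent ord (source_mat nr s t m \<gamma>)"
    and "k0 < nr"
    and "0 < u" and "0 < v"
    and "M \<in> minors u (sink_mat nr s t m (t k0))"
    and "N \<in> minors v (source_mat nr s t m (s k0))"
    and "adjacent ord u (sink_mat nr s t m (t k0)) v (source_mat nr s t m (s k0)) M N"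
  shows "\<not> (\<exists>p1 p2 p3. violation ord M N p1 p2 p3)"
  using adjacent_minors_no_violation[OF assms(2) assms(3)[rule_format, THEN conjunct1]
      assms(3)[rule_format, THEN conjunct2] assms(7-9)] by simp

end
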